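(* Let $p\in(1,\infty)$ and $\gamma>2-1/p$. For $b\ge0$ let $\mathcal{D}_\gamma=\{u\in M^{2,p}_{\gamma-2}:u_x\in L^p_\gamma\}$ and $\mathcal{L}_b:\mathcal{D}_\gamma\to L^p_\gamma$, $\mathcal{L}_b\rho=\partial_{xx}\rho-2b\tanh(x)\partial_x\rho$. Then there is a constant $C$, independent of $b\ge0$, such that for all $f$ in the range of $\mathcal{L}_b$ and all solutions $u$ of $\mathcal{L}_bu=f$, \[ \|u\|_{M^{2,p}_{\gamma-2}}\le C\|f\|_{L^p_\gamma}. \]
   Context: $\langle x\rangle=(1+x^2)^{1/2}$; $L^p_\gamma$ is the completion of $C_0^\infty(\mathbb{R})$ under $(\int|u\langle x\rangle^\gamma|^p)^{1/p}$; $M^{k,p}_\gamma$ is the completion under $\big(\sum_{\alpha\le k}\|\partial_x^\alpha u\,\langle x\rangle^{\gamma+\alpha}\|_{L^p}^p\big)^{1/p}$. *)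

theory Defs
  imports "HOL-Analysis.Analysis"
begin

definition jb :: "real \<Rightarrow> real" where
  "jb x = (1 + x\<^sup>2) powr (1/2)"

definition wLp_norm :: "real \<Rightarrow> real \<Rightarrow> (real \<Rightarrow> real) \<Rightarrow> real" where
  "wLp_norm p \<gamma> g = (\<integral>x. \<bar>g x * jb x powr \<gamma>\<bar> powr p \<partial>lborel) powr (1/p)"

text \<open>Membership in L^p_\<gamma> (for 1 \<le> p < \<infinity> the completion of C_0^\<infinity> under the weighted
  norm is the space of measurable functions with finite weighted norm).\<close>
definition in_wLp :: "real \<Rightarrow> real \<Rightarrow> (real \<Rightarrow> real) \<Rightarrow> bool" where
  "in_wLp p \<gamma> g \<longleftrightarrow> g \<in> borel_measurable lborel \<and>
     integrable lborel (\<lambda>x. \<bar>g x * jb x powr \<gamma>\<bar> powr p)"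

text \<open>A function u on the real line with derivatives u1 = u' and u2 = u'' in the
  W^{2,1}_loc sense: u is differentiable everywhere with derivative u1, and u1 is
  absolutely continuous with a.e. derivative u2 (u2 locally integrable).\<close>
definition second_derivs :: "(real \<Rightarrow> real) \<Rightarrow> (real \<Rightarrow> real) \<Rightarrow> (real \<Rightarrow> real) \<Rightarrow> bool" where
  "second_derivs u u1 u2 \<longleftrightarrow>
     (\<forall>x. (u has_real_derivative u1 x) (at x)) \<and>
     (\<forall>x y. x \<le> y \<longrightarrow> set_integrable lborel {x..y} u2 \<and>
        u1 y - u1 x = (LINT t:{x..y}|lborel. u2 t))"

definition in_M2 :: "real \<Rightarrow> real \<Rightarrow> (real \<Rightarrow> real) \<Rightarrow> (real \<Rightarrow> real) \<Rightarrow> (real \<Rightarrow> real) \<Rightarrow> bool" where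
  "in_M2 p \<gamma> u u1 u2 \<longleftrightarrow> second_derivs u u1 u2 \<and>
     in_wLp p \<gamma> u \<and> in_wLp p (\<gamma> + 1) u1 \<and> in_wLp p (\<gamma> + 2) u2"

definition M2_norm :: "real \<Rightarrow> real \<Rightarrow> (real \<Rightarrow> real) \<Rightarrow> (real \<Rightarrow> real) \<Rightarrow> (real \<Rightarrow> real) \<Rightarrow> real" where
  "M2_norm p \<gamma> u u1 u2 =
     ((\<integral>x. \<bar>u x * jb x powr \<gamma>\<bar> powr p \<partial>lborel)
      + (\<integral>x. \<bar>u1 x * jb x powr (\<gamma> + 1)\<bar> powr p \<partial>lborel)
      + (\<integral>x. \<bar>u2 x * jb x powr (\<gamma> + 2)\<bar> powr p \<partial>lborel)) powr (1/p)"

definition in_D :: "real \<Rightarrow> real \<Rightarrow> (real \<Rightarrow> real) \<Rightarrow> (real \<Rightarrow> real) \<Rightarrow> (real \<Rightarrow> real) \<Rightarrow> bool" where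
  "in_D p \<gamma> u u1 u2 \<longleftrightarrow> in_M2 p (\<gamma> - 2) u u1 u2 \<and> in_wLp p \<gamma> u1"

end

theory Submission
  imports Defs
begin

text \<open>Multiplying by the integrating factor \<open>w\<^sub>b = cosh powr (-2b)\<close> turns \<open>u'' - 2 b tanh u' = f\<close>
  into \<open>(w\<^sub>b u')' = w\<^sub>b f\<close>, and the decay of \<open>u'\<close> at \<open>+\<infinity>\<close> gives
  \<open>u'(x) = - \<integral>\<^sub>x\<^sup>\<infinity> w\<^sub>b(t)/w\<^sub>b(x) f(t) dt\<close>. On \<open>[0,\<infinity>)\<close> the factor \<open>w\<^sub>b\<close> decreases, so
  \<open>|u'(x)| \<le> \<integral>\<^sub>x\<^sup>\<infinity> |f|\<close> and \<open>|u(x)| \<le> \<integral>\<^sub>x\<^sup>\<infinity> |u'|\<close>; the weighted Hardy inequality, valid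
  because \<open>\<gamma> - 2 > -1/p\<close>, bounds \<open>u'\<close> in \<open>L\<^sup>p\<^sub>\<gamma>\<^sub>-\<^sub>1\<close> and \<open>u\<close> in \<open>L\<^sup>p\<^sub>\<gamma>\<^sub>-\<^sub>2\<close> with constants
  independent of \<open>b\<close>. The drift \<open>2 b tanh u'\<close> is bounded in \<open>L\<^sup>p\<^sub>\<gamma>\<close> by Schur's test for the kernel
  \<open>2 b tanh x w\<^sub>b(t)/w\<^sub>b(x)\<close> on \<open>0 \<le> x \<le> t\<close>, whose row and column integrals are exact
  derivatives bounded by 1 for every \<open>b\<close>; then \<open>u'' = f + 2 b tanh u'\<close>. The half-line
  \<open>(-\<infinity>, 0]\<close> is handled by the reflection \<open>x \<mapsto> -x\<close>, which preserves the equation.\<close>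

section \<open>Schur's test\<close>

lemma Young_inequality_powr:
  fixes p c y :: real
  assumes p: "1 < p" and c: "0 \<le> c" and y: "0 \<le> y"
  shows "p * c powr (p-1) * y \<le> y powr p + (p-1) * c powr p"
proof -
  define q where "q = p/(p-1)"
  have q: "q > 1" "1/p + 1/q = 1" using p by (auto simp: q_def field_simps)
  have "y * c powr (p-1) \<le> y powr p / p + (c powr (p-1)) powr q / q"
    by (rule Youngs_inequality) (use p q y c in auto)
  also have "(c powr (p-1)) powr q = c powr p"
    using p by (simp add: powr_powr q_def)
  finally have "y * c powr (p-1) \<le> y powr p / p + c powr p / q" .
  then have "p * (y * c powr (p-1)) \<le> p * (y powr p / p + c powr p / q)"
    using p by (intro mult_left_mono) auto
  also have "\<dots> = y powr p + (p-1) * c powr p" using p by (simp add: q_def field_simps)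
  finally show ?thesis by (simp add: ac_simps)
qed

text \<open>Hoelder's inequality, obtained by optimising the previous inequality over \<open>c\<close>
  (the optimum is \<open>c = h / a\<close>).\<close>
lemma powr_le_of_Young_bounds:
  fixes p a h G I :: real
  assumes p: "1 < p" and a: "0 < a" and h: "0 \<le> h" "h \<le> G" and I: "0 \<le> I"
    and Young: "\<And>c. 0 < c \<Longrightarrow> p * c powr (p-1) * G \<le> I + (p-1) * c powr p * a"
  shows "h powr p \<le> a powr (p-1) * I"
proof (cases "h = 0")
  case True
  then show ?thesis using p I by simp
next
  case False
  define c where "c = h / a"
  have c: "0 < c" using False h a by (simp add: c_def)
  define X where "X = h powr p / a powr (p-1)"
  have "p * c powr (p-1) * h \<le> p * c powr (p-1) * G"
    using h p c by (intro mult_left_mono) auto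
  also have "\<dots> \<le> I + (p-1) * c powr p * a" by (rule Young[OF c])
  finally have "p * (c powr (p-1) * h) \<le> I + (p-1) * (c powr p * a)" by (simp add: mult.assoc)
  moreover have "c powr (p-1) * h = X" "c powr p * a = X"
    using False h a by (simp_all add: X_def c_def powr_divide powr_diff field_simps)
  ultimately have "X \<le> I" by (simp add: left_diff_distrib)
  then show ?thesis using a by (simp add: X_def divide_le_eq mult.commute)
qed

lemma Young_inequality_weighted:
  fixes p c k g \<phi> :: real
  assumes p: "1 < p" and c: "0 < c" and k: "0 \<le> k" and g: "0 \<le> g" and \<phi>: "0 < \<phi>"
  shows "p * c powr (p-1) * (k * g) \<le> k * g powr p * \<phi> powr (1-p) + (p-1) * c powr p * (k * \<phi>)"
proof -
  have y: "p * c powr (p-1) * (g / \<phi>) \<le> (g / \<phi>) powr p + (p-1) * c powr p"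
    by (rule Young_inequality_powr) (use p c g \<phi> in auto)
  have "p * c powr (p-1) * (k * g) = (k * \<phi>) * (p * c powr (p-1) * (g / \<phi>))"
    using \<phi> by (simp add: field_simps)
  also have "\<dots> \<le> (k * \<phi>) * ((g / \<phi>) powr p + (p-1) * c powr p)"
    by (intro mult_left_mono y) (use k \<phi> in auto)
  also have "(g / \<phi>) powr p = g powr p * \<phi> powr (-p)"
    using g \<phi> by (simp add: powr_divide powr_minus_divide)
  also have "\<phi> * \<phi> powr (-p) = \<phi> powr (1-p)"
    using \<phi> by (simp add: powr_diff powr_minus_divide)
  then have "(k * \<phi>) * (g powr p * \<phi> powr (-p) + (p-1) * c powr p)
      = k * g powr p * \<phi> powr (1-p) + (p-1) * c powr p * (k * \<phi>)"
    by (simp add: algebra_simps)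
  finally show ?thesis .
qed

lemma nn_integral_Young_bound:
  fixes K g \<phi> :: "real \<Rightarrow> real" and p a c :: real
  assumes p: "1 < p" and c: "0 < c"
    and [measurable]: "K \<in> borel_measurable borel" "g \<in> borel_measurable borel" "\<phi> \<in> borel_measurable borel"
    and K0: "\<And>t. 0 \<le> K t" and g0: "\<And>t. 0 \<le> g t" and \<phi>0: "\<And>t. 0 < \<phi> t"
    and rows: "(\<integral>\<^sup>+t. ennreal (K t * \<phi> t) \<partial>lborel) \<le> ennreal a"
  shows "ennreal (p * c powr (p-1)) * (\<integral>\<^sup>+t. ennreal (K t * g t) \<partial>lborel)
    \<le> (\<integral>\<^sup>+t. ennreal (K t * g t powr p * \<phi> t powr (1-p)) \<partial>lborel) + ennreal ((p-1) * c powr p) * ennreal a"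
proof -
  have "ennreal (p * c powr (p-1)) * (\<integral>\<^sup>+t. ennreal (K t * g t) \<partial>lborel)
      = (\<integral>\<^sup>+t. ennreal (p * c powr (p-1) * (K t * g t)) \<partial>lborel)"
    using p c K0 g0
    by (subst nn_integral_cmult[symmetric]) (auto simp: ennreal_mult[symmetric] intro!: nn_integral_cong)
  also have "\<dots> \<le> (\<integral>\<^sup>+t. ennreal (K t * g t powr p * \<phi> t powr (1-p))
                     + ennreal ((p-1) * c powr p) * ennreal (K t * \<phi> t) \<partial>lborel)"
  proof (intro nn_integral_mono)
    fix t
    have "0 \<le> K t * \<phi> t" using K0[of t] \<phi>0[of t] by simp
    then have "ennreal (K t * g t powr p * \<phi> t powr (1-p)) + ennreal ((p-1) * c powr p) * ennreal (K t * \<phi> t)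
        = ennreal (K t * g t powr p * \<phi> t powr (1-p) + (p-1) * c powr p * (K t * \<phi> t))"
      using K0[of t] p by (simp add: ennreal_mult[symmetric] ennreal_plus)
    then show "ennreal (p * c powr (p-1) * (K t * g t))
        \<le> ennreal (K t * g t powr p * \<phi> t powr (1-p)) + ennreal ((p-1) * c powr p) * ennreal (K t * \<phi> t)"
      using Young_inequality_weighted[OF p c K0 g0 \<phi>0] by (simp add: ennreal_leI)
  qed
  also have "\<dots> = (\<integral>\<^sup>+t. ennreal (K t * g t powr p * \<phi> t powr (1-p)) \<partial>lborel)
                 + ennreal ((p-1) * c powr p) * (\<integral>\<^sup>+t. ennreal (K t * \<phi> t) \<partial>lborel)"
    by (subst nn_integral_add) (auto simp: nn_integral_cmult)
  also have "\<dots> \<le> (\<integral>\<^sup>+t. ennreal (K t * g t powr p * \<phi> t powr (1-p)) \<partial>lborel)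
                 + ennreal ((p-1) * c powr p) * ennreal a"
    by (intro add_left_mono mult_left_mono rows) auto
  finally show ?thesis .
qed

lemma nn_integral_Hoelder_weighted:
  fixes K g \<phi> :: "real \<Rightarrow> real" and p a h :: real
  assumes p: "1 < p"
    and [measurable]: "K \<in> borel_measurable borel" "g \<in> borel_measurable borel" "\<phi> \<in> borel_measurable borel"
    and K0: "\<And>t. 0 \<le> K t" and g0: "\<And>t. 0 \<le> g t" and \<phi>0: "\<And>t. 0 < \<phi> t"
    and a0: "0 < a" and h0: "0 \<le> h"
    and rows: "(\<integral>\<^sup>+t. ennreal (K t * \<phi> t) \<partial>lborel) \<le> ennreal a"
    and hK: "ennreal h \<le> (\<integral>\<^sup>+t. ennreal (K t * g t) \<partial>lborel)"
  shows "ennreal (h powr p) \<le> ennreal (a powr (p-1)) *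
           (\<integral>\<^sup>+t. ennreal (K t * g t powr p * \<phi> t powr (1-p)) \<partial>lborel)"
proof -
  define I where "I = (\<integral>\<^sup>+t. ennreal (K t * g t powr p * \<phi> t powr (1-p)) \<partial>lborel)"
  define G where "G = (\<integral>\<^sup>+t. ennreal (K t * g t) \<partial>lborel)"
  have Young: "ennreal (p * c powr (p-1)) * G \<le> I + ennreal ((p-1) * c powr p) * ennreal a"
    if "0 < c" for c
    unfolding I_def G_def by (rule nn_integral_Young_bound[OF p that _ _ _ K0 g0 \<phi>0 rows]) auto
  show ?thesis
  proof (cases "I = \<infinity>")
    case True
    then show ?thesis using a0 unfolding I_def[symmetric] by (simp add: ennreal_mult_top)
  next
    case False
    then obtain Ir where Ir: "I = ennreal Ir" "0 \<le> Ir" by (cases I) auto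
    have "ennreal p * G \<le> ennreal (Ir + (p-1) * a)"
      using Young[of 1] Ir p a0 by (simp add: ennreal_plus ennreal_mult'')
    then have "G \<noteq> \<infinity>" using p by (auto simp: ennreal_mult_top top_unique)
    then obtain Gr where Gr: "G = ennreal Gr" "0 \<le> Gr" by (cases G) auto
    have "h powr p \<le> a powr (p-1) * Ir"
    proof (rule powr_le_of_Young_bounds[OF p a0 h0 _ Ir(2)])
      show "h \<le> Gr" using hK Gr h0 unfolding G_def[symmetric] by (simp add: ennreal_le_iff)
      fix c :: real assume c: "0 < c"
      have "ennreal (p * c powr (p-1) * Gr) \<le> ennreal (Ir + (p-1) * c powr p * a)"
        using Young[OF c] Gr Ir p a0 by (simp add: ennreal_mult ennreal_plus mult.assoc)
      then show "p * c powr (p-1) * Gr \<le> Ir + (p-1) * c powr p * a"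
        using Ir p c a0 by (subst (asm) ennreal_le_iff) auto
    qed
    then show ?thesis unfolding I_def[symmetric] using Ir a0
      by (simp add: ennreal_mult''[symmetric])
  qed
qed

lemma Schur_test:
  fixes K :: "real \<Rightarrow> real \<Rightarrow> real" and g \<phi> a h :: "real \<Rightarrow> real" and p \<beta> :: real
  assumes p: "1 < p" and \<beta>: "0 \<le> \<beta>"
    and Km[measurable]: "(\<lambda>z. K (fst z) (snd z)) \<in> borel_measurable (borel \<Otimes>\<^sub>M borel)"
    and [measurable]: "g \<in> borel_measurable borel" "\<phi> \<in> borel_measurable borel" "a \<in> borel_measurable borel"
    and K0: "\<And>x t. 0 \<le> K x t" and g0: "\<And>t. 0 \<le> g t" and \<phi>0: "\<And>t. 0 < \<phi> t"
    and a0: "\<And>x. 0 < a x" and h0: "\<And>x. 0 \<le> h x"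
    and rows: "\<And>x. (\<integral>\<^sup>+t. ennreal (K x t * \<phi> t) \<partial>lborel) \<le> ennreal (a x)"
    and cols: "\<And>t. (\<integral>\<^sup>+x. ennreal (a x powr (p-1) * K x t) \<partial>lborel) \<le> ennreal (\<beta> * \<phi> t powr (p-1))"
    and hK: "\<And>x. ennreal (h x) \<le> (\<integral>\<^sup>+t. ennreal (K x t * g t) \<partial>lborel)"
  shows "(\<integral>\<^sup>+x. ennreal (h x powr p) \<partial>lborel) \<le> ennreal \<beta> * (\<integral>\<^sup>+t. ennreal (g t powr p) \<partial>lborel)"
proof -
  have [measurable]: "K x \<in> borel_measurable borel" "(\<lambda>x. K x t) \<in> borel_measurable borel" for x t
    using measurable_compose[OF measurable_Pair1' Km] measurable_compose[OF measurable_Pair2' Km] by auto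
  have "(\<integral>\<^sup>+x. ennreal (h x powr p) \<partial>lborel) \<le>
        (\<integral>\<^sup>+x. ennreal (a x powr (p-1)) * (\<integral>\<^sup>+t. ennreal (K x t * g t powr p * \<phi> t powr (1-p)) \<partial>lborel) \<partial>lborel)"
    by (intro nn_integral_mono nn_integral_Hoelder_weighted[OF p] K0 g0 \<phi>0 a0 h0 rows hK) auto
  also have "\<dots> = (\<integral>\<^sup>+x. (\<integral>\<^sup>+t. ennreal (a x powr (p-1) * K x t * (g t powr p * \<phi> t powr (1-p))) \<partial>lborel) \<partial>lborel)"
    using K0 by (subst nn_integral_cmult[symmetric]) (auto simp: ennreal_mult[symmetric] ac_simps intro!: nn_integral_cong)
  also have "\<dots> = (\<integral>\<^sup>+t. (\<integral>\<^sup>+x. ennreal (a x powr (p-1) * K x t * (g t powr p * \<phi> t powr (1-p))) \<partial>lborel) \<partial>lborel)"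
  proof (rule lborel_pair.Fubini'[symmetric])
    have "(\<lambda>z. ennreal (a (fst z) powr (p-1) * K (fst z) (snd z) * (g (snd z) powr p * \<phi> (snd z) powr (1-p))))
        \<in> borel_measurable (borel \<Otimes>\<^sub>M borel)"
      by measurable
    then show "(\<lambda>(x, t). ennreal (a x powr (p-1) * K x t * (g t powr p * \<phi> t powr (1-p))))
        \<in> borel_measurable (lborel \<Otimes>\<^sub>M lborel)"
      by (simp add: lborel_prod measurable_lborel1 borel_prod case_prod_beta')
  qed
  also have "\<dots> = (\<integral>\<^sup>+t. ennreal (g t powr p * \<phi> t powr (1-p)) * (\<integral>\<^sup>+x. ennreal (a x powr (p-1) * K x t) \<partial>lborel) \<partial>lborel)"
    using K0 by (subst nn_integral_cmult[symmetric]) (auto simp: ennreal_mult[symmetric] ac_simps intro!: nn_integral_cong)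
  also have "\<dots> \<le> (\<integral>\<^sup>+t. ennreal (g t powr p * \<phi> t powr (1-p)) * ennreal (\<beta> * \<phi> t powr (p-1)) \<partial>lborel)"
    by (intro nn_integral_mono mult_left_mono cols) auto
  also have "\<dots> = (\<integral>\<^sup>+t. ennreal \<beta> * ennreal (g t powr p) \<partial>lborel)"
  proof (intro nn_integral_cong)
    fix t
    have "\<phi> t powr (1-p) * \<phi> t powr (p-1) = 1" using \<phi>0[of t] by (simp add: powr_add[symmetric])
    then have "g t powr p * \<phi> t powr (1-p) * (\<beta> * \<phi> t powr (p-1)) = \<beta> * g t powr p"
      by (simp add: algebra_simps)
    then show "ennreal (g t powr p * \<phi> t powr (1-p)) * ennreal (\<beta> * \<phi> t powr (p-1)) = ennreal \<beta> * ennreal (g t powr p)"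
      using \<beta> by (simp add: ennreal_mult[symmetric])
  qed
  also have "\<dots> = ennreal \<beta> * (\<integral>\<^sup>+t. ennreal (g t powr p) \<partial>lborel)"
    by (rule nn_integral_cmult) auto
  finally show ?thesis .
qed

section \<open>Hardy's inequality on the half-line\<close>

lemma nn_integral_powr_tail:
  fixes x c :: real
  assumes x: "0 \<le> x" and c: "0 < c"
  shows "(\<integral>\<^sup>+t. ennreal ((1+t) powr (-c-1)) * indicator {x..} t \<partial>lborel) = ennreal ((1+x) powr (-c) / c)"
proof -
  have lim: "((\<lambda>t. - ((1+t) powr (-c) / c)) \<longlongrightarrow> -(0/c)) at_top"
    by (intro tendsto_minus tendsto_divide tendsto_const tendsto_neg_powr
        filterlim_tendsto_add_at_top[OF tendsto_const filterlim_ident]) (use c in auto)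
  have "(\<integral>\<^sup>+t. ennreal ((1+t) powr (-c-1)) * indicator {x..} t \<partial>lborel) = ennreal (-(0/c) - (- ((1+x) powr (-c) / c)))"
  proof (rule nn_integral_FTC_atLeast[OF _ _ _ lim])
    fix t assume "x \<le> t"
    then have "1 + t > 0" using x by simp
    then show "DERIV (\<lambda>t. - ((1+t) powr (-c) / c)) t :> (1+t) powr (-c-1)"
      using c by (auto intro!: derivative_eq_intros simp: field_simps)
  qed auto
  then show ?thesis by simp
qed

lemma nn_integral_powr_head:
  fixes t e :: real
  assumes t: "0 \<le> t" and e: "0 < e"
  shows "(\<integral>\<^sup>+x. ennreal ((1+x) powr (e-1)) * indicator {0..t} x \<partial>lborel) \<le> ennreal ((1+t) powr e / e)"
proof -
  have "(\<integral>\<^sup>+x. ennreal ((1+x) powr (e-1)) * indicator {0..t} x \<partial>lborel) = ennreal ((1+t) powr e / e - (1+0) powr e / e)"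
  proof (rule nn_integral_FTC_Icc)
    fix x :: real assume "x \<in> {0..t}"
    then have "1 + x > 0" by simp
    then show "DERIV (\<lambda>x. (1+x) powr e / e) x :> (1+x) powr (e-1)"
      using e by (auto intro!: derivative_eq_intros simp: field_simps)
  qed (use t in auto)
  also have "\<dots> \<le> ennreal ((1+t) powr e / e)" using e by (intro ennreal_leI) auto
  finally show ?thesis .
qed

definition hardy_kernel :: "real \<Rightarrow> real \<Rightarrow> real \<Rightarrow> real" where
  "hardy_kernel a x t = (if 0 \<le> x \<and> x \<le> t then (1+x) powr a * (1+t) powr (-a-1) else 0)"

lemma hardy_kernel_nonneg: "0 \<le> hardy_kernel a x t"
  by (simp add: hardy_kernel_def)

lemma borel_measurable_hardy_kernel[measurable]:
  "(\<lambda>z. hardy_kernel a (fst z) (snd z)) \<in> borel_measurable (borel \<Otimes>\<^sub>M borel)"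
  unfolding hardy_kernel_def by measurable

lemma hardy_kernel_row:
  assumes d: "0 < a + s"
  shows "(\<integral>\<^sup>+t. ennreal (hardy_kernel a x t * (1 + \<bar>t\<bar>) powr (-s)) \<partial>lborel)
    \<le> ennreal ((1 + \<bar>x\<bar>) powr (-s) / (a + s))"
proof (cases "0 \<le> x")
  case x: True
  have "(\<integral>\<^sup>+t. ennreal (hardy_kernel a x t * (1 + \<bar>t\<bar>) powr (-s)) \<partial>lborel) =
        (\<integral>\<^sup>+t. ennreal ((1+x) powr a) * (ennreal ((1+t) powr (-(a+s)-1)) * indicator {x..} t) \<partial>lborel)"
  proof (intro nn_integral_cong)
    fix t :: real
    show "ennreal (hardy_kernel a x t * (1 + \<bar>t\<bar>) powr (-s))
        = ennreal ((1+x) powr a) * (ennreal ((1+t) powr (-(a+s)-1)) * indicator {x..} t)"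
    proof (cases "x \<le> t")
      case True
      then have "1 + t > 0" "\<bar>t\<bar> = t" using x by auto
      moreover have "(1+t) powr (-a-1) * (1+t) powr (-s) = (1+t) powr (-(a+s)-1)"
        by (simp add: powr_add[symmetric] algebra_simps)
      ultimately show ?thesis using True x
        by (simp add: hardy_kernel_def ennreal_mult[symmetric] mult.assoc)
    qed (simp add: hardy_kernel_def)
  qed
  also have "\<dots> = ennreal ((1+x) powr a) * ennreal ((1+x) powr (-(a+s)) / (a+s))"
    by (subst nn_integral_cmult) (use nn_integral_powr_tail[OF x d] in auto)
  also have "\<dots> = ennreal ((1 + \<bar>x\<bar>) powr (-s) / (a + s))"
    using x d by (simp add: ennreal_mult[symmetric] powr_add[symmetric])
  finally show ?thesis by simp
qed (simp add: hardy_kernel_def)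

lemma hardy_kernel_col:
  assumes p: "1 < p" and d: "0 < a + s" and e: "0 < a + 1 - s * (p-1)"
  shows "(\<integral>\<^sup>+x. ennreal (((1 + \<bar>x\<bar>) powr (-s) / (a+s)) powr (p-1) * hardy_kernel a x t) \<partial>lborel)
    \<le> ennreal ((a+s) powr (1-p) / (a + 1 - s * (p-1)) * ((1 + \<bar>t\<bar>) powr (-s)) powr (p-1))"
proof (cases "0 \<le> t")
  case t: True
  define e' where "e' = a + 1 - s * (p-1)"
  have "(\<integral>\<^sup>+x. ennreal (((1 + \<bar>x\<bar>) powr (-s) / (a+s)) powr (p-1) * hardy_kernel a x t) \<partial>lborel) =
        (\<integral>\<^sup>+x. ennreal ((a+s) powr (1-p) * (1+t) powr (-a-1)) * (ennreal ((1+x) powr (e'-1)) * indicator {0..t} x) \<partial>lborel)"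
  proof (intro nn_integral_cong)
    fix x :: real
    show "ennreal (((1 + \<bar>x\<bar>) powr (-s) / (a+s)) powr (p-1) * hardy_kernel a x t)
        = ennreal ((a+s) powr (1-p) * (1+t) powr (-a-1)) * (ennreal ((1+x) powr (e'-1)) * indicator {0..t} x)"
    proof (cases "0 \<le> x \<and> x \<le> t")
      case True
      then have x: "1 + x > 0" "\<bar>x\<bar> = x" by auto
      have "(a+s) powr (1-p) = 1 / (a+s) powr (p-1)"
        using powr_minus_divide[of "a+s" "p-1"] by simp
      then have "((1 + \<bar>x\<bar>) powr (-s) / (a+s)) powr (p-1) = (1+x) powr (-s*(p-1)) * (a+s) powr (1-p)"
        using x d by (simp add: powr_divide powr_powr)
      moreover have "(1+x) powr (-s*(p-1)) * (1+x) powr a = (1+x) powr (e'-1)"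
        unfolding e'_def by (simp add: powr_add[symmetric] algebra_simps)
      ultimately have "((1 + \<bar>x\<bar>) powr (-s) / (a+s)) powr (p-1) * hardy_kernel a x t
          = (a+s) powr (1-p) * (1+t) powr (-a-1) * (1+x) powr (e'-1)"
        using True unfolding hardy_kernel_def by (simp add: algebra_simps)
      then show ?thesis using True by (simp add: ennreal_mult[symmetric])
    qed (auto simp: hardy_kernel_def)
  qed
  also have "\<dots> \<le> ennreal ((a+s) powr (1-p) * (1+t) powr (-a-1)) * ennreal ((1+t) powr e' / e')"
    using e unfolding e'_def[symmetric]
    by (subst nn_integral_cmult) (use nn_integral_powr_head[OF t] in \<open>auto intro: mult_left_mono\<close>)
  also have "\<dots> = ennreal ((a+s) powr (1-p) / e' * ((1 + \<bar>t\<bar>) powr (-s)) powr (p-1))"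
  proof -
    have "(1+t) powr (-a-1) * (1+t) powr e' = ((1 + \<bar>t\<bar>) powr (-s)) powr (p-1)"
      using t unfolding e'_def by (simp add: powr_add[symmetric] powr_powr algebra_simps)
    then show ?thesis using e unfolding e'_def[symmetric] by (simp add: ennreal_mult[symmetric] field_simps)
  qed
  finally show ?thesis by (simp add: e'_def)
next
  case False
  then have "(\<lambda>x. ennreal (((1 + \<bar>x\<bar>) powr (-s) / (a+s)) powr (p-1) * hardy_kernel a x t)) = (\<lambda>x. 0)"
    by (auto simp: hardy_kernel_def fun_eq_iff)
  then show ?thesis by simp
qed

text \<open>Any \<open>s \<in> (-a, (a+1)/(p-1))\<close> makes \<open>(1+t) powr (-s)\<close> a test function for Schur's test
  with the kernel above; the interval is nonempty exactly when \<open>a > -1/p\<close>.\<close>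
definition hardy_const :: "real \<Rightarrow> real \<Rightarrow> real" where
  "hardy_const p a = (let s = (-a + (a+1)/(p-1))/2 in (a+s) powr (1-p) / (a + 1 - s * (p-1)))"

lemma hardy_midpoint_bounds:
  fixes p a :: real
  assumes p: "1 < p" and a: "-1/p < a"
  defines "s \<equiv> (-a + (a+1)/(p-1))/2"
  shows "0 < a + s" and "0 < a + 1 - s * (p-1)"
proof -
  define Q where "Q = (a+1)/(p-1)"
  have "-a*(p-1) < a + 1"
    using a p by (simp add: field_simps)
  then have "-a < Q" using p by (simp add: Q_def field_simps)
  then have "-a < s" "s < Q" unfolding s_def Q_def[symmetric] by simp_all
  then show "0 < a + s" "0 < a + 1 - s * (p-1)" using p by (simp_all add: Q_def field_simps)
qed

lemma hardy_const_nonneg: "1 < p \<Longrightarrow> -1/p < a \<Longrightarrow> 0 \<le> hardy_const p a"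
  using hardy_midpoint_bounds[of p a] by (simp add: hardy_const_def Let_def)

lemma hardy_inequality:
  fixes p a :: real and g h :: "real \<Rightarrow> real"
  assumes p: "1 < p" and a: "-1/p < a"
    and [measurable]: "g \<in> borel_measurable borel" and g0: "\<And>t. 0 \<le> g t" and h0: "\<And>x. 0 \<le> h x"
    and hK: "\<And>x. 0 \<le> x \<Longrightarrow> ennreal (h x) \<le> (\<integral>\<^sup>+t. ennreal (hardy_kernel a x t * g t) \<partial>lborel)"
  shows "(\<integral>\<^sup>+x. ennreal (indicator {0..} x * h x powr p) \<partial>lborel) \<le>
     ennreal (hardy_const p a) * (\<integral>\<^sup>+t. ennreal (indicator {0..} t * g t powr p) \<partial>lborel)"
proof -
  define s where "s = (-a + (a+1)/(p-1))/2"
  have d: "0 < a + s" and e: "0 < a + 1 - s * (p-1)"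
    using hardy_midpoint_bounds[OF p a] by (simp_all add: s_def)
  have "(\<integral>\<^sup>+x. ennreal ((indicator {0..} x * h x) powr p) \<partial>lborel) \<le>
     ennreal (hardy_const p a) * (\<integral>\<^sup>+t. ennreal ((indicator {0..} t * g t) powr p) \<partial>lborel)"
  proof (rule Schur_test[OF p, where K="hardy_kernel a" and \<phi>="\<lambda>t. (1 + \<bar>t\<bar>) powr (-s)"
        and a="\<lambda>x. (1 + \<bar>x\<bar>) powr (-s) / (a+s)"])
    show "0 \<le> hardy_const p a" using hardy_const_nonneg[OF p a] .
    show "\<And>x. 0 < (1 + \<bar>x\<bar>) powr (-s) / (a+s)" using d by simp
    show "\<And>x. (\<integral>\<^sup>+t. ennreal (hardy_kernel a x t * (1 + \<bar>t\<bar>) powr (-s)) \<partial>lborel)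
        \<le> ennreal ((1 + \<bar>x\<bar>) powr (-s) / (a+s))"
      by (rule hardy_kernel_row[OF d])
    show "\<And>t. (\<integral>\<^sup>+x. ennreal (((1 + \<bar>x\<bar>) powr (-s) / (a+s)) powr (p-1) * hardy_kernel a x t) \<partial>lborel)
        \<le> ennreal (hardy_const p a * ((1 + \<bar>t\<bar>) powr (-s)) powr (p-1))"
      using hardy_kernel_col[OF p d e] by (simp add: hardy_const_def Let_def s_def)
    fix x :: real
    show "ennreal (indicator {0..} x * h x) \<le> (\<integral>\<^sup>+t. ennreal (hardy_kernel a x t * (indicator {0..} t * g t)) \<partial>lborel)"
    proof (cases "0 \<le> x")
      case True
      have "(\<lambda>t. ennreal (hardy_kernel a x t * (indicator {0..} t * g t)))
          = (\<lambda>t. ennreal (hardy_kernel a x t * g t))"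
        by (auto simp: hardy_kernel_def indicator_def fun_eq_iff)
      then show ?thesis using hK[OF True] True by (simp only: indicator_simps mult_1) (simp add: indicator_def)
    qed simp
  qed (use g0 h0 in \<open>auto simp: hardy_kernel_nonneg\<close>)
  moreover have "(indicator {0..} y * k y) powr p = indicator {0..} y * k y powr p" for k :: "real \<Rightarrow> real" and y
    using p by (simp add: indicator_def)
  ultimately show ?thesis by simp
qed

section \<open>The Japanese bracket and weighted \<open>L\<^sup>p\<close> spaces\<close>

lemma jb_sqrt: "jb x = sqrt (1 + x\<^sup>2)"
  unfolding jb_def by (simp add: powr_half_sqrt add_nonneg_nonneg)

lemma jb_ge_1: "1 \<le> jb x"
  unfolding jb_sqrt by simp

lemma jb_pos: "0 < jb x"
  using jb_ge_1[of x] by simp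

lemma jb_minus[simp]: "jb (-x) = jb x"
  unfolding jb_sqrt by simp

lemma borel_measurable_jb[measurable]: "jb \<in> borel_measurable borel"
  unfolding jb_sqrt by (intro borel_measurable_continuous_onI continuous_intros)

lemma jb_le_one_plus: "0 \<le> x \<Longrightarrow> jb x \<le> 1 + x"
  unfolding jb_sqrt by (rule real_le_lsqrt) (auto simp: power2_eq_square algebra_simps)

lemma one_plus_le_jb: "0 \<le> x \<Longrightarrow> 1 + x \<le> sqrt 2 * jb x"
proof -
  assume x: "0 \<le> x"
  have "(1+x)\<^sup>2 \<le> 2 * (1 + x\<^sup>2)"
    using zero_le_power2[of "x-1"] by (simp add: power2_eq_square algebra_simps)
  then have "1 + x \<le> sqrt (2 * (1 + x\<^sup>2))" using x by (intro real_le_rsqrt) auto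
  then show ?thesis unfolding jb_sqrt real_sqrt_mult .
qed

lemma jb_mono: "0 \<le> x \<Longrightarrow> x \<le> y \<Longrightarrow> jb x \<le> jb y"
  unfolding jb_sqrt by (simp add: power_mono)

lemma le_two_powr_mult: "0 \<le> X \<Longrightarrow> X \<le> 2 powr (\<bar>e\<bar>/2) * (X::real)"
  using mult_right_mono[OF ge_one_powr_ge_zero[of 2 "\<bar>e\<bar>/2"], of X] by simp

lemma jb_powr_le_one_plus_powr:
  assumes x: "0 \<le> x"
  shows "jb x powr e \<le> 2 powr (\<bar>e\<bar>/2) * (1+x) powr e"
proof (cases "0 \<le> e")
  case True
  have "jb x powr e \<le> (1+x) powr e"
    using True jb_le_one_plus[OF x] jb_pos[of x] by (intro powr_mono2) auto
  also have "\<dots> \<le> 2 powr (\<bar>e\<bar>/2) * (1+x) powr e"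
    using x by (intro le_two_powr_mult) auto
  finally show ?thesis .
next
  case False
  have "jb x powr e \<le> ((1+x)/sqrt 2) powr e"
    using False one_plus_le_jb[OF x] x by (intro powr_mono2') (auto simp: field_simps)
  also have "\<dots> = 2 powr (\<bar>e\<bar>/2) * (1+x) powr e"
    using False x by (simp add: powr_divide powr_half_sqrt[symmetric] powr_powr powr_minus_divide field_simps)
  finally show ?thesis .
qed

lemma one_plus_powr_le_jb_powr:
  assumes x: "0 \<le> x"
  shows "(1+x) powr e \<le> 2 powr (\<bar>e\<bar>/2) * jb x powr e"
proof (cases "0 \<le> e")
  case True
  have "(1+x) powr e \<le> (sqrt 2 * jb x) powr e"
    using True one_plus_le_jb[OF x] x by (intro powr_mono2) auto
  also have "\<dots> = 2 powr (\<bar>e\<bar>/2) * jb x powr e"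
    using True by (simp add: powr_mult powr_half_sqrt[symmetric] powr_powr)
  finally show ?thesis .
next
  case False
  have "(1+x) powr e \<le> jb x powr e"
    using False jb_le_one_plus[OF x] jb_pos[of x] by (intro powr_mono2') auto
  also have "\<dots> \<le> 2 powr (\<bar>e\<bar>/2) * jb x powr e"
    by (intro le_two_powr_mult) auto
  finally show ?thesis .
qed

lemma inverse_one_plus_le_jb_powr:
  assumes t: "0 \<le> t" and e: "-1 \<le> e"
  shows "1/(1+t) \<le> jb t powr e"
proof (cases "0 \<le> e")
  case True
  have "1/(1+t) \<le> 1" using t by simp
  also have "1 \<le> jb t powr e" using True jb_ge_1[of t] by (simp add: ge_one_powr_ge_zero)
  finally show ?thesis .
next
  case False
  have "1/(1+t) = (1+t) powr (-1)" using t by (simp add: powr_minus_divide)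
  also have "\<dots> \<le> (1+t) powr e" using e t by (intro powr_mono) auto
  also have "\<dots> \<le> jb t powr e" using False jb_le_one_plus[OF t] jb_pos[of t] by (intro powr_mono2') auto
  finally show ?thesis .
qed

lemma nn_integral_le_reflect_halves:
  fixes f :: "real \<Rightarrow> ennreal"
  assumes [measurable]: "f \<in> borel_measurable borel"
  shows "(\<integral>\<^sup>+x. f x \<partial>lborel)
    \<le> (\<integral>\<^sup>+x. f x * indicator {0..} x \<partial>lborel) + (\<integral>\<^sup>+x. f (-x) * indicator {0..} x \<partial>lborel)"
proof -
  have "(\<integral>\<^sup>+x. f x \<partial>lborel) \<le> (\<integral>\<^sup>+x. f x * indicator {0..} x + f x * indicator {..0} x \<partial>lborel)"
    by (intro nn_integral_mono) (auto simp: indicator_def)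
  also have "\<dots> = (\<integral>\<^sup>+x. f x * indicator {0..} x \<partial>lborel) + (\<integral>\<^sup>+x. f x * indicator {..0} x \<partial>lborel)"
    by (rule nn_integral_add) auto
  also have "(\<integral>\<^sup>+x. f x * indicator {..0} x \<partial>lborel) = (\<integral>\<^sup>+x. f (-x) * indicator {0..} x \<partial>lborel)"
    by (subst nn_integral_real_affine[where c="-1" and t=0]) (auto simp: indicator_def intro!: nn_integral_cong)
  finally show ?thesis .
qed

lemma integrable_jb_powr:
  assumes c: "1 < c"
  shows "integrable lborel (\<lambda>x. jb x powr (-c))"
proof -
  have half: "(\<integral>\<^sup>+x. ennreal (jb x powr (-c)) * indicator {0..} x \<partial>lborel) < \<infinity>"
  proof -
    have "(\<integral>\<^sup>+x. ennreal (jb x powr (-c)) * indicator {0..} x \<partial>lborel) \<le>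
          (\<integral>\<^sup>+x. ennreal (2 powr (c/2)) * (ennreal ((1+x) powr (-(c-1)-1)) * indicator {0..} x) \<partial>lborel)"
    proof (intro nn_integral_mono)
      fix x :: real
      show "ennreal (jb x powr (-c)) * indicator {0..} x
          \<le> ennreal (2 powr (c/2)) * (ennreal ((1+x) powr (-(c-1)-1)) * indicator {0..} x)"
        using jb_powr_le_one_plus_powr[of x "-c"] c
        by (cases "0 \<le> x") (auto simp: ennreal_mult[symmetric] intro!: ennreal_leI)
    qed
    also have "\<dots> = ennreal (2 powr (c/2)) * ennreal (1 / (c-1))"
      using nn_integral_powr_tail[of 0 "c-1"] c by (subst nn_integral_cmult) auto
    finally show ?thesis by (rule le_less_trans) (simp add: ennreal_mult_less_top)
  qed
  have "(\<integral>\<^sup>+x. ennreal (norm (jb x powr (-c))) \<partial>lborel) \<le>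
       (\<integral>\<^sup>+x. ennreal (jb x powr (-c)) * indicator {0..} x \<partial>lborel)
       + (\<integral>\<^sup>+x. ennreal (jb (-x) powr (-c)) * indicator {0..} x \<partial>lborel)"
    using nn_integral_le_reflect_halves[of "\<lambda>x. ennreal (jb x powr (-c))"] by simp
  also have "\<dots> < \<infinity>" using half by simp
  finally show ?thesis by (subst integrable_iff_bounded) auto
qed

text \<open>By Young's inequality \<open>|g| \<le> |g \<langle>x\<rangle>\<^sup>e|\<^sup>p / p + \<langle>x\<rangle>\<^sup>-\<^sup>e\<^sup>q / q\<close>, and \<open>e q > 1\<close> makes the
  last term integrable.\<close>
lemma in_wLp_integrable:
  fixes p e :: real and g :: "real \<Rightarrow> real"
  assumes p: "1 < p" and e: "1 - 1/p < e" and g: "in_wLp p e g"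
  shows "integrable lborel g"
proof -
  define q where "q = p/(p-1)"
  have q: "q > 1" "1/p + 1/q = 1" using p by (auto simp: q_def field_simps)
  have eq: "e * q > 1"
    using e p by (simp add: q_def field_simps)
  have [measurable]: "g \<in> borel_measurable lborel" using g by (simp add: in_wLp_def)
  have bound: "\<bar>g x\<bar> \<le> \<bar>g x * jb x powr e\<bar> powr p / p + jb x powr (-(e*q)) / q" for x
  proof -
    have "\<bar>g x\<bar> = \<bar>g x * jb x powr e\<bar> * jb x powr (-e)"
      using jb_pos[of x] by (simp add: abs_mult powr_minus field_simps)
    also have "\<dots> \<le> \<bar>g x * jb x powr e\<bar> powr p / p + (jb x powr (-e)) powr q / q"
      by (rule Youngs_inequality) (use p q in auto)
    finally show ?thesis by (simp add: powr_powr)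
  qed
  show ?thesis
  proof (rule Bochner_Integration.integrable_bound)
    show "integrable lborel (\<lambda>x. \<bar>g x * jb x powr e\<bar> powr p / p + jb x powr (-(e*q)) / q)"
      using g integrable_jb_powr[OF eq] unfolding in_wLp_def
      by (intro Bochner_Integration.integrable_add integrable_divide_zero) auto
    show "AE x in lborel. norm (g x) \<le> norm (\<bar>g x * jb x powr e\<bar> powr p / p + jb x powr (-(e*q)) / q)"
      using bound q p by (intro AE_I2) (simp add: add_nonneg_nonneg)
  qed simp
qed

lemma nn_integral_inverse_one_plus_infinite:
  fixes Y c :: real
  assumes Y: "0 \<le> Y" and c: "0 < c"
  shows "(\<integral>\<^sup>+t. ennreal (c / (1+t)) * indicator {Y..} t \<partial>lborel) = \<infinity>"
proof (rule ccontr)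
  assume "(\<integral>\<^sup>+t. ennreal (c / (1+t)) * indicator {Y..} t \<partial>lborel) \<noteq> \<infinity>"
  then obtain m where m: "(\<integral>\<^sup>+t. ennreal (c / (1+t)) * indicator {Y..} t \<partial>lborel) = ennreal m" "0 \<le> m"
    using ennreal_cases[of "\<integral>\<^sup>+t. ennreal (c / (1+t)) * indicator {Y..} t \<partial>lborel"] by auto
  define Z where "Z = (1+Y) * exp (m/c + 1) - 1"
  have "1 + Y \<le> (1+Y) * exp (m/c + 1)"
    using mult_left_mono[of 1 "exp (m/c + 1)" "1+Y"] m c Y by simp
  then have YZ: "Y \<le> Z" by (simp add: Z_def)
  have "(\<integral>\<^sup>+t. ennreal (c / (1+t)) * indicator {Y..Z} t \<partial>lborel) = ennreal (c * ln (1+Z) - c * ln (1+Y))"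
  proof (rule nn_integral_FTC_Icc)
    fix t assume "t \<in> {Y..Z}"
    then have "1 + t > 0" using Y by auto
    then show "DERIV (\<lambda>t. c * ln (1+t)) t :> c / (1+t)" "0 \<le> c / (1+t)"
      using c by (auto intro!: derivative_eq_intros)
  qed (use YZ in auto)
  also have "c * ln (1+Z) - c * ln (1+Y) = m + c"
  proof -
    have "ln (1+Z) - ln (1+Y) = m/c + 1" using Y by (simp add: Z_def ln_mult)
    then show ?thesis using c by (simp add: field_simps right_diff_distrib[symmetric])
  qed
  finally have "(\<integral>\<^sup>+t. ennreal (c / (1+t)) * indicator {Y..Z} t \<partial>lborel) = ennreal (m + c)" .
  moreover have "(\<integral>\<^sup>+t. ennreal (c / (1+t)) * indicator {Y..Z} t \<partial>lborel)
      \<le> (\<integral>\<^sup>+t. ennreal (c / (1+t)) * indicator {Y..} t \<partial>lborel)"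
    by (intro nn_integral_mono) (auto simp: indicator_def)
  ultimately show False using c m by (simp add: ennreal_le_iff)
qed

text \<open>If \<open>e p \<ge> -1\<close>, a nonzero limit at \<open>+\<infinity>\<close> would make \<open>|g \<langle>x\<rangle>\<^sup>e|\<^sup>p \<ge> c/(1+x)\<close> near \<open>+\<infinity>\<close>.\<close>
lemma in_wLp_limit_at_top_eq_0:
  fixes p e L :: real and g G :: "real \<Rightarrow> real"
  assumes p: "0 < p" and e: "-1 \<le> e * p" and g: "in_wLp p e g"
    and lim: "(G \<longlongrightarrow> L) at_top" and Gg: "\<And>y. \<bar>G y\<bar> \<le> \<bar>g y\<bar>"
  shows "L = 0"
proof (rule ccontr)
  assume L: "L \<noteq> 0"
  define c where "c = \<bar>L\<bar>/2"
  have c: "0 < c" using L by (simp add: c_def)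
  have "eventually (\<lambda>y. dist (G y) L < c) at_top"
    using lim c by (rule tendstoD)
  then obtain Y0 where Y0: "\<And>y. Y0 \<le> y \<Longrightarrow> dist (G y) L < c"
    by (auto simp: eventually_at_top_linorder)
  define Y where "Y = max Y0 0"
  have gY: "c \<le> \<bar>g y\<bar>" if "Y \<le> y" for y
    using Y0[of y] that Gg[of y] unfolding Y_def c_def dist_real_def by linarith
  have [measurable]: "g \<in> borel_measurable borel" using g by (simp add: in_wLp_def)
  have "(\<integral>\<^sup>+t. ennreal (c powr p / (1+t)) * indicator {Y..} t \<partial>lborel) \<le>
        (\<integral>\<^sup>+t. ennreal (norm (\<bar>g t * jb t powr e\<bar> powr p)) \<partial>lborel)"
  proof (intro nn_integral_mono)
    fix t
    show "ennreal (c powr p / (1+t)) * indicator {Y..} t \<le> ennreal (norm (\<bar>g t * jb t powr e\<bar> powr p))"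
    proof (cases "Y \<le> t")
      case True
      then have t: "0 \<le> t" by (simp add: Y_def)
      have "c powr p / (1+t) = c powr p * (1/(1+t))" by simp
      also have "\<dots> \<le> \<bar>g t\<bar> powr p * jb t powr (e*p)"
        using gY[OF True] c p inverse_one_plus_le_jb_powr[OF t e] t by (intro mult_mono powr_mono2) auto
      also have "\<dots> = \<bar>g t * jb t powr e\<bar> powr p"
        using jb_pos[of t] by (simp add: abs_mult powr_mult powr_powr)
      finally show ?thesis using True by (auto intro: ennreal_leI)
    qed auto
  qed
  moreover have "(\<integral>\<^sup>+t. ennreal (c powr p / (1+t)) * indicator {Y..} t \<partial>lborel) = \<infinity>"
    using c by (intro nn_integral_inverse_one_plus_infinite) (auto simp: Y_def)
  moreover have "(\<integral>\<^sup>+t. ennreal (norm (\<bar>g t * jb t powr e\<bar> powr p)) \<partial>lborel) < \<infinity>"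
    using g unfolding in_wLp_def integrable_iff_bounded by auto
  ultimately show False by (simp add: top_unique)
qed

lemma in_wLp_reflect:
  assumes g: "in_wLp p e g" and s: "\<bar>s\<bar> = 1"
  shows "in_wLp p e (\<lambda>x. s * g (-x))"
proof -
  have [measurable]: "g \<in> borel_measurable borel" using g by (simp add: in_wLp_def)
  have "integrable lborel (\<lambda>x. \<bar>g (0 + (-1) * x) * jb (0 + (-1) * x) powr e\<bar> powr p)"
    using g unfolding in_wLp_def by (intro lborel_integrable_real_affine) auto
  then show ?thesis using s unfolding in_wLp_def by (simp add: abs_mult)
qed

definition wLp_pow :: "real \<Rightarrow> real \<Rightarrow> (real \<Rightarrow> real) \<Rightarrow> ennreal" where
  "wLp_pow p e g = (\<integral>\<^sup>+x. ennreal (\<bar>g x * jb x powr e\<bar> powr p) \<partial>lborel)"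

definition wLp_pow_pos :: "real \<Rightarrow> real \<Rightarrow> (real \<Rightarrow> real) \<Rightarrow> ennreal" where
  "wLp_pow_pos p e g = (\<integral>\<^sup>+x. ennreal (indicator {0..} x * \<bar>g x * jb x powr e\<bar> powr p) \<partial>lborel)"

lemma wLp_pow_reflect:
  assumes [measurable]: "g \<in> borel_measurable borel"
  shows "wLp_pow p e (\<lambda>x. g (-x)) = wLp_pow p e g"
  unfolding wLp_pow_def
  by (subst nn_integral_real_affine[where c="-1" and t=0, of "\<lambda>t. ennreal (\<bar>g (-t) * jb t powr e\<bar> powr p)"]) auto

lemma wLp_pow_pos_le: "wLp_pow_pos p e g \<le> wLp_pow p e g"
  unfolding wLp_pow_pos_def wLp_pow_def by (intro nn_integral_mono ennreal_leI) (auto simp: indicator_def)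

lemma ennreal_mult_add_mult:
  "0 \<le> a \<Longrightarrow> 0 \<le> c \<Longrightarrow> ennreal a * N + ennreal c * N = ennreal (a + c) * N"
  by (simp add: ennreal_plus distrib_right)

lemma wLp_pow_le_halves:
  assumes [measurable]: "g \<in> borel_measurable borel" and c: "0 \<le> c"
    and "wLp_pow_pos p e g \<le> ennreal c * N" and "wLp_pow_pos p e (\<lambda>x. g (-x)) \<le> ennreal c * N"
  shows "wLp_pow p e g \<le> ennreal (2 * c) * N"
proof -
  have "wLp_pow p e g \<le> wLp_pow_pos p e g + wLp_pow_pos p e (\<lambda>x. g (-x))"
    using nn_integral_le_reflect_halves[of "\<lambda>x. ennreal (\<bar>g x * jb x powr e\<bar> powr p)"]
    unfolding wLp_pow_def wLp_pow_pos_def by (simp add: ennreal_mult' ennreal_indicator mult.commute)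
  also have "\<dots> \<le> ennreal c * N + ennreal c * N" using assms(3,4) by (rule add_mono)
  also have "\<dots> = ennreal (2 * c) * N" using ennreal_mult_add_mult[OF c c] by simp
  finally show ?thesis .
qed

lemma wLp_pow_eq_integral:
  "in_wLp p e g \<Longrightarrow> wLp_pow p e g = ennreal (\<integral>x. \<bar>g x * jb x powr e\<bar> powr p \<partial>lborel)"
  unfolding wLp_pow_def in_wLp_def by (intro nn_integral_eq_integral) auto

lemma powr_abs_mult_jb_le:
  assumes "0 \<le> x" "0 < p"
  shows "\<bar>z * jb x powr e\<bar> powr p \<le> (2 powr (\<bar>e\<bar>/2)) powr p * (\<bar>z\<bar> * (1+x) powr e) powr p"
proof -
  have "\<bar>z * jb x powr e\<bar> \<le> 2 powr (\<bar>e\<bar>/2) * (\<bar>z\<bar> * (1+x) powr e)"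
    using mult_left_mono[OF jb_powr_le_one_plus_powr[OF assms(1)], of "\<bar>z\<bar>" e]
    by (simp add: abs_mult ac_simps)
  then show ?thesis using assms by (simp add: powr_mono2 flip: powr_mult)
qed

lemma powr_abs_mult_one_plus_le:
  assumes "0 \<le> x" "0 < p"
  shows "(\<bar>z\<bar> * (1+x) powr e) powr p \<le> (2 powr (\<bar>e\<bar>/2)) powr p * \<bar>z * jb x powr e\<bar> powr p"
proof -
  have "\<bar>z\<bar> * (1+x) powr e \<le> 2 powr (\<bar>e\<bar>/2) * \<bar>z * jb x powr e\<bar>"
    using mult_left_mono[OF one_plus_powr_le_jb_powr[OF assms(1)], of "\<bar>z\<bar>" e]
    by (simp add: abs_mult ac_simps)
  then show ?thesis using assms by (simp add: powr_mono2 flip: powr_mult)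
qed

definition hardy_jb_const :: "real \<Rightarrow> real \<Rightarrow> real" where
  "hardy_jb_const p a = (2 powr (\<bar>a\<bar>/2)) powr p * hardy_const p a * (2 powr (\<bar>a+1\<bar>/2)) powr p"

lemma hardy_jb_const_nonneg: "1 < p \<Longrightarrow> -1/p < a \<Longrightarrow> 0 \<le> hardy_jb_const p a"
  unfolding hardy_jb_const_def using hardy_const_nonneg by simp

lemma wLp_pow_pos_le_one_plus_weight:
  assumes p: "0 < p" and [measurable]: "F \<in> borel_measurable borel"
  shows "wLp_pow_pos p a F \<le> ennreal ((2 powr (\<bar>a\<bar>/2)) powr p) *
    (\<integral>\<^sup>+x. ennreal (indicator {0..} x * (\<bar>F x\<bar> * (1+x) powr a) powr p) \<partial>lborel)"
proof -
  have "wLp_pow_pos p a F \<le> (\<integral>\<^sup>+x. ennreal ((2 powr (\<bar>a\<bar>/2)) powr p) *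
      ennreal (indicator {0..} x * (\<bar>F x\<bar> * (1+x) powr a) powr p) \<partial>lborel)"
    unfolding wLp_pow_pos_def using powr_abs_mult_jb_le p
    by (intro nn_integral_mono) (auto simp: ennreal_mult[symmetric] indicator_def intro!: ennreal_leI)
  also have "\<dots> = ennreal ((2 powr (\<bar>a\<bar>/2)) powr p) *
      (\<integral>\<^sup>+x. ennreal (indicator {0..} x * (\<bar>F x\<bar> * (1+x) powr a) powr p) \<partial>lborel)"
    by (rule nn_integral_cmult) measurable
  finally show ?thesis .
qed

lemma one_plus_weight_le_wLp_pow_pos:
  assumes p: "0 < p" and [measurable]: "G \<in> borel_measurable borel"
  shows "(\<integral>\<^sup>+x. ennreal (indicator {0..} x * (\<bar>G x\<bar> * (1+x) powr a) powr p) \<partial>lborel)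
    \<le> ennreal ((2 powr (\<bar>a\<bar>/2)) powr p) * wLp_pow_pos p a G"
proof -
  have "(\<integral>\<^sup>+x. ennreal (indicator {0..} x * (\<bar>G x\<bar> * (1+x) powr a) powr p) \<partial>lborel)
      \<le> (\<integral>\<^sup>+x. ennreal ((2 powr (\<bar>a\<bar>/2)) powr p) * ennreal (indicator {0..} x * \<bar>G x * jb x powr a\<bar> powr p) \<partial>lborel)"
    using powr_abs_mult_one_plus_le p
    by (intro nn_integral_mono) (auto simp: ennreal_mult[symmetric] indicator_def intro!: ennreal_leI)
  also have "\<dots> = ennreal ((2 powr (\<bar>a\<bar>/2)) powr p) * wLp_pow_pos p a G"
    unfolding wLp_pow_pos_def by (rule nn_integral_cmult) measurable
  finally show ?thesis .
qed

lemma hardy_inequality_jb: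
  fixes F G :: "real \<Rightarrow> real"
  assumes p: "1 < p" and a: "-1/p < a"
    and [measurable]: "F \<in> borel_measurable borel" "G \<in> borel_measurable borel"
    and FG: "\<And>x. 0 \<le> x \<Longrightarrow> ennreal \<bar>F x\<bar> \<le> (\<integral>\<^sup>+t. ennreal (indicator {x..} t * \<bar>G t\<bar>) \<partial>lborel)"
  shows "wLp_pow_pos p a F \<le> ennreal (hardy_jb_const p a) * wLp_pow_pos p (a+1) G"
proof -
  define h g where "h = (\<lambda>x. \<bar>F x\<bar> * (1+x) powr a)" and "g = (\<lambda>t. \<bar>G t\<bar> * (1+t) powr (a+1))"
  define c0 c1 where "c0 = (2 powr (\<bar>a\<bar>/2)) powr p" and "c1 = (2 powr (\<bar>a+1\<bar>/2)) powr p"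
  have H: "(\<integral>\<^sup>+x. ennreal (indicator {0..} x * h x powr p) \<partial>lborel)
      \<le> ennreal (hardy_const p a) * (\<integral>\<^sup>+t. ennreal (indicator {0..} t * g t powr p) \<partial>lborel)"
  proof (rule hardy_inequality[OF p a])
    show "g \<in> borel_measurable borel" unfolding g_def by measurable
    show "\<And>t. 0 \<le> g t" "\<And>x. 0 \<le> h x" unfolding g_def h_def by auto
    fix x :: real assume x: "0 \<le> x"
    have "ennreal (h x) = ennreal ((1+x) powr a) * ennreal \<bar>F x\<bar>"
      unfolding h_def by (simp add: ennreal_mult[symmetric] mult.commute)
    also have "\<dots> \<le> ennreal ((1+x) powr a) * (\<integral>\<^sup>+t. ennreal (indicator {x..} t * \<bar>G t\<bar>) \<partial>lborel)"
      by (intro mult_left_mono FG x) auto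
    also have "\<dots> = (\<integral>\<^sup>+t. ennreal ((1+x) powr a) * ennreal (indicator {x..} t * \<bar>G t\<bar>) \<partial>lborel)"
      by (rule nn_integral_cmult[symmetric]) auto
    also have "\<dots> = (\<integral>\<^sup>+t. ennreal (hardy_kernel a x t * g t) \<partial>lborel)"
    proof (intro nn_integral_cong)
      fix t :: real
      show "ennreal ((1+x) powr a) * ennreal (indicator {x..} t * \<bar>G t\<bar>) = ennreal (hardy_kernel a x t * g t)"
      proof (cases "x \<le> t")
        case True
        have "(1+t) powr (-a-1) * (1+t) powr (a+1) = 1"
          using True x by (simp add: powr_add[symmetric])
        then have "hardy_kernel a x t * g t = (1+x) powr a * \<bar>G t\<bar>"
          using True x unfolding hardy_kernel_def g_def by (simp add: ac_simps)
        then show ?thesis using True by (simp add: ennreal_mult[symmetric])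
      qed (simp add: hardy_kernel_def)
    qed
    finally show "ennreal (h x) \<le> (\<integral>\<^sup>+t. ennreal (hardy_kernel a x t * g t) \<partial>lborel)" .
  qed
  have "wLp_pow_pos p a F \<le> ennreal c0 * (\<integral>\<^sup>+x. ennreal (indicator {0..} x * h x powr p) \<partial>lborel)"
    unfolding c0_def h_def using p by (intro wLp_pow_pos_le_one_plus_weight) auto
  also have "\<dots> \<le> ennreal c0 * (ennreal (hardy_const p a) * (\<integral>\<^sup>+t. ennreal (indicator {0..} t * g t powr p) \<partial>lborel))"
    by (intro mult_left_mono H) auto
  also have "\<dots> \<le> ennreal c0 * (ennreal (hardy_const p a) * (ennreal c1 * wLp_pow_pos p (a+1) G))"
    unfolding c1_def g_def using p one_plus_weight_le_wLp_pow_pos[of p G "a+1"]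
    by (intro mult_left_mono) auto
  also have "\<dots> = ennreal (hardy_jb_const p a) * wLp_pow_pos p (a+1) G"
    using hardy_const_nonneg[OF p a] by (simp add: hardy_jb_const_def c0_def c1_def ennreal_mult ac_simps)
  finally show ?thesis .
qed

lemma eq_neg_integral_tail:
  fixes F g w :: "real \<Rightarrow> real"
  assumes p: "0 < p" and e: "-1 \<le> e * p" and w: "in_wLp p e w"
    and g: "integrable lborel g"
    and F: "\<And>y. x \<le> y \<Longrightarrow> F y - F x = (\<integral>t. indicator {x..y} t * g t \<partial>lborel)"
    and Fw: "\<And>y. \<bar>F y\<bar> \<le> \<bar>w y\<bar>"
  shows "F x = - (\<integral>t. indicator {x..} t * g t \<partial>lborel)"
proof -
  have "integrable lborel (\<lambda>t. indicator {x..} t * g t)"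
    using integrable_mult_indicator[of "{x..}" lborel g] g by simp
  then have "((\<lambda>y. \<integral>t. indicator {..y} t *\<^sub>R (indicator {x..} t * g t) \<partial>lborel)
      \<longlongrightarrow> (\<integral>t. indicator {x..} t * g t \<partial>lborel)) at_top"
    by (intro tendsto_integral_at_top) simp_all
  then have "((\<lambda>y. F x + (\<integral>t. indicator {..y} t *\<^sub>R (indicator {x..} t * g t) \<partial>lborel))
      \<longlongrightarrow> F x + (\<integral>t. indicator {x..} t * g t \<partial>lborel)) at_top"
    by (rule tendsto_add[OF tendsto_const])
  then have "(F \<longlongrightarrow> F x + (\<integral>t. indicator {x..} t * g t \<partial>lborel)) at_top"
  proof (rule Lim_transform_eventually)
    show "\<forall>\<^sub>F y in at_top. F x + (\<integral>t. indicator {..y} t *\<^sub>R (indicator {x..} t * g t) \<partial>lborel) = F y"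
    proof (rule eventually_at_top_linorderI[of x])
      fix y assume "x \<le> y"
      have "(\<integral>t. indicator {..y} t *\<^sub>R (indicator {x..} t * g t) \<partial>lborel) = (\<integral>t. indicator {x..y} t * g t \<partial>lborel)"
        by (intro Bochner_Integration.integral_cong) (auto simp: indicator_def)
      then show "F x + (\<integral>t. indicator {..y} t *\<^sub>R (indicator {x..} t * g t) \<partial>lborel) = F y"
        using F[OF \<open>x \<le> y\<close>] by simp
    qed
  qed
  then have "F x + (\<integral>t. indicator {x..} t * g t \<partial>lborel) = 0"
    by (rule in_wLp_limit_at_top_eq_0[OF p e w _ Fw])
  then show ?thesis by simp
qed

section \<open>Functions with a locally integrable second derivative\<close>

lemma second_derivs_integral:
  assumes "second_derivs u v u2" and "x \<le> y"
  shows "integrable lborel (\<lambda>t. indicator {x..y} t * u2 t)"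
    and "v y - v x = (\<integral>t. indicator {x..y} t * u2 t \<partial>lborel)"
  using assms unfolding second_derivs_def set_integrable_def set_lebesgue_integral_def by auto

lemma second_derivs_isCont:
  assumes sd: "second_derivs u v u2"
  shows "isCont v z"
proof -
  define a b where "a = z - 1" and "b = z + 1"
  have si: "set_integrable lborel {a..s} u2" for s
    using sd unfolding second_derivs_def by (cases "a \<le> s") (auto simp: set_integrable_def)
  have v: "v s = v a + integral {a..s} u2" if "s \<in> {a..b}" for s
  proof -
    have "v s - v a = (LINT t:{a..s}|lborel. u2 t)" using sd that unfolding second_derivs_def by simp
    then show ?thesis using set_borel_integral_eq_integral(2)[OF si[of s]] by simp
  qed
  have "continuous_on {a..b} (\<lambda>s. v a + integral {a..s} u2)"
    using set_borel_integral_eq_integral(1)[OF si[of b]]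
    by (intro continuous_intros indefinite_integral_continuous_1)
  moreover have "continuous_on {a..b} v = continuous_on {a..b} (\<lambda>s. v a + integral {a..s} u2)"
    by (rule continuous_on_cong) (auto intro: v)
  ultimately have "continuous_on {a..b} v" by simp
  then show ?thesis
    by (rule continuous_on_interior) (auto simp: a_def b_def)
qed

lemma second_derivs_borel_measurable:
  "second_derivs u v u2 \<Longrightarrow> v \<in> borel_measurable borel"
  by (intro borel_measurable_continuous_onI continuous_at_imp_continuous_on ballI second_derivs_isCont)

lemma second_derivs_reflect:
  assumes sd: "second_derivs u v u2"
  shows "second_derivs (\<lambda>x. u (-x)) (\<lambda>x. - v (-x)) (\<lambda>x. u2 (-x))"
  unfolding second_derivs_def
proof (intro conjI allI impI)
  fix x :: real
  have "(u has_real_derivative v (-x)) (at (-x))" using sd unfolding second_derivs_def by auto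
  then show "((\<lambda>x. u (-x)) has_real_derivative - v (-x)) (at x)" by (simp add: DERIV_mirror)
next
  fix x y :: real assume xy: "x \<le> y"
  have ind: "indicator {-y..-x} (-t) = (indicator {x..y} t :: real)" for t
    by (auto simp: indicator_def)
  have "integrable lborel (\<lambda>t. indicator {-y..-x} (0 + (-1) * t) * u2 (0 + (-1) * t))"
    using second_derivs_integral(1)[OF sd, of "-y" "-x"] xy by (intro lborel_integrable_real_affine) auto
  then show "set_integrable lborel {x..y} (\<lambda>x. u2 (-x))"
    unfolding set_integrable_def by (simp add: ind)
  have "v (-x) - v (-y) = (\<integral>t. indicator {-y..-x} t * u2 t \<partial>lborel)"
    using second_derivs_integral(2)[OF sd, of "-y" "-x"] xy by simp
  also have "\<dots> = \<bar>-1\<bar> *\<^sub>R (\<integral>t. indicator {-y..-x} (0 + (-1) * t) * u2 (0 + (-1) * t) \<partial>lborel)"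
    by (rule lborel_integral_real_affine) simp
  finally show "- v (-y) - - v (-x) = (LINT t:{x..y}|lborel. u2 (-t))"
    unfolding set_lebesgue_integral_def by (simp add: ind)
qed

lemma integrable_indicator_triangle:
  fixes g k :: "real \<Rightarrow> real"
  assumes xy: "x \<le> y" and g: "integrable lborel (\<lambda>t. indicator {x..y} t * g t)"
    and [measurable]: "k \<in> borel_measurable borel" and k: "\<And>s. \<bar>k s\<bar> \<le> B"
  shows "integrable (lborel \<Otimes>\<^sub>M lborel) (\<lambda>(t, s). indicator {x..y} t * g t * ((if t \<le> s \<and> s \<le> y then 1 else 0) * k s))"
proof -
  define G where "G = (\<lambda>t. indicator {x..y} t * g t)"
  define F where "F = (\<lambda>t s. G t * ((if t \<le> s \<and> s \<le> y then 1 else 0) * k s))"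
  have [measurable]: "G \<in> borel_measurable borel"
    using borel_measurable_integrable[OF g] by (simp add: G_def)
  have "(\<lambda>z. F (fst z) (snd z)) \<in> borel_measurable (borel \<Otimes>\<^sub>M borel)"
    unfolding F_def by measurable
  then have M: "case_prod F \<in> borel_measurable (lborel \<Otimes>\<^sub>M lborel)"
    by (simp add: lborel_prod measurable_lborel1 borel_prod case_prod_beta')
  have B: "0 \<le> B" using k[of 0] by simp
  have "integrable (lborel \<Otimes>\<^sub>M lborel) (case_prod F)"
  proof (subst integrable_iff_bounded, intro conjI M)
    have "(\<integral>\<^sup>+z. ennreal (norm (case_prod F z)) \<partial>(lborel \<Otimes>\<^sub>M lborel))
        = (\<integral>\<^sup>+t. \<integral>\<^sup>+s. ennreal (norm (F t s)) \<partial>lborel \<partial>lborel)"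
      using M by (subst lborel.nn_integral_fst[symmetric]) auto
    also have "\<dots> \<le> (\<integral>\<^sup>+t. \<integral>\<^sup>+s. ennreal (norm (G t) * B) * indicator {x..y} s \<partial>lborel \<partial>lborel)"
    proof (intro nn_integral_mono)
      fix t s :: real
      have "norm (F t s) \<le> norm (G t) * B * indicator {x..y} s"
      proof (cases "G t = 0")
        case False
        then have "x \<le> t" by (auto simp: G_def indicator_def split: if_splits)
        then show ?thesis using k[of s] by (auto simp: F_def abs_mult indicator_def mult_left_mono)
      qed (simp add: F_def)
      then show "ennreal (norm (F t s)) \<le> ennreal (norm (G t) * B) * indicator {x..y} s"
        by (auto simp: indicator_def intro: ennreal_leI)
    qed
    also have "\<dots> = (\<integral>\<^sup>+t. ennreal (norm (G t)) * ennreal (B * (y - x)) \<partial>lborel)"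
      using xy B by (intro nn_integral_cong) (simp add: nn_integral_cmult ennreal_mult[symmetric] mult.assoc)
    also have "\<dots> = (\<integral>\<^sup>+t. ennreal (norm (G t)) \<partial>lborel) * ennreal (B * (y - x))"
      by (rule nn_integral_multc) auto
    also have "\<dots> < \<infinity>"
      using g unfolding G_def integrable_iff_bounded by (simp add: ennreal_mult_less_top)
    finally show "(\<integral>\<^sup>+z. ennreal (norm (case_prod F z)) \<partial>(lborel \<Otimes>\<^sub>M lborel)) < \<infinity>" .
  qed
  then show ?thesis unfolding F_def G_def .
qed

text \<open>Integration by parts with the primitive of \<open>g\<close> written as an integral; the proof is
  Fubini's theorem on the triangle \<open>x \<le> t \<le> s \<le> y\<close>.\<close>
lemma integral_by_parts_indicator:
  fixes g w w' :: "real \<Rightarrow> real" and x y B :: real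
  assumes xy: "x \<le> y" and g: "integrable lborel (\<lambda>t. indicator {x..y} t * g t)"
    and w: "\<And>s. (w has_real_derivative w' s) (at s)" and w'c: "\<And>s. isCont w' s" and w'b: "\<And>s. \<bar>w' s\<bar> \<le> B"
  shows "(\<integral>t. indicator {x..y} t * (w t * g t) \<partial>lborel) =
     w y * (\<integral>t. indicator {x..y} t * g t \<partial>lborel) -
     (\<integral>s. indicator {x..y} s * (w' s * (\<integral>t. indicator {x..s} t * g t \<partial>lborel)) \<partial>lborel)"
proof -
  define G where "G = (\<lambda>t. indicator {x..y} t * g t)"
  define F where "F = (\<lambda>t s. G t * ((if t \<le> s \<and> s \<le> y then 1 else 0) * w' s))"
  have [measurable]: "w' \<in> borel_measurable borel"
    by (intro borel_measurable_continuous_onI continuous_at_imp_continuous_on) (auto intro: w'c)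
  have Fint: "integrable (lborel \<Otimes>\<^sub>M lborel) (case_prod F)"
    unfolding F_def G_def by (rule integrable_indicator_triangle[OF xy g _ w'b]) measurable
  have pointwise: "indicator {x..y} t * (w t * g t) = w y * G t - (\<integral>s. F t s \<partial>lborel)" for t
  proof (cases "t \<in> {x..y}")
    case True
    have "(\<integral>s. F t s \<partial>lborel) = G t * (\<integral>s. w' s * indicator {t..y} s \<partial>lborel)"
      unfolding F_def by (subst integral_mult_right_zero[symmetric])
        (auto intro!: Bochner_Integration.integral_cong simp: indicator_def)
    also have "(\<integral>s. w' s * indicator {t..y} s \<partial>lborel) = w y - w t"
      using True by (intro integral_FTC_Icc_real w w'c) auto
    finally show ?thesis using True by (simp add: G_def algebra_simps)
  qed (simp add: F_def G_def)
  have "(\<integral>t. indicator {x..y} t * (w t * g t) \<partial>lborel) = (\<integral>t. w y * G t - (\<integral>s. F t s \<partial>lborel) \<partial>lborel)"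
    using pointwise by simp
  also have "\<dots> = w y * (\<integral>t. G t \<partial>lborel) - (\<integral>t. \<integral>s. F t s \<partial>lborel \<partial>lborel)"
    using g lborel_pair.integrable_fst'[OF Fint] unfolding G_def by simp
  also have "(\<integral>t. \<integral>s. F t s \<partial>lborel \<partial>lborel) = (\<integral>s. \<integral>t. F t s \<partial>lborel \<partial>lborel)"
    using lborel_pair.Fubini_integral[OF Fint] by simp
  also have "\<dots> = (\<integral>s. indicator {x..y} s * (w' s * (\<integral>t. indicator {x..s} t * g t \<partial>lborel)) \<partial>lborel)"
  proof (intro Bochner_Integration.integral_cong refl)
    fix s :: real
    have "F t s = indicator {x..y} s * w' s * (indicator {x..s} t * g t)" for t
      by (auto simp: F_def G_def indicator_def)
    then show "(\<integral>t. F t s \<partial>lborel) = indicator {x..y} s * (w' s * (\<integral>t. indicator {x..s} t * g t \<partial>lborel))"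
      by simp
  qed
  finally show ?thesis unfolding G_def .
qed

lemma second_derivs_product_rule:
  assumes sd: "second_derivs u v u2" and xy: "x \<le> y"
    and w: "\<And>s. (w has_real_derivative w' s) (at s)" and w'c: "\<And>s. isCont w' s" and w'b: "\<And>s. \<bar>w' s\<bar> \<le> B"
  shows "(\<integral>t. indicator {x..y} t * (w t * u2 t) \<partial>lborel)
    = w y * v y - w x * v x - (\<integral>t. indicator {x..y} t * (w' t * v t) \<partial>lborel)"
proof -
  have vc: "\<And>s. isCont v s" using second_derivs_isCont[OF sd] .
  have int: "integrable lborel (\<lambda>s. indicator {x..y} s * k s)" if "\<And>s. isCont k s" for k :: "real \<Rightarrow> real"
    using borel_integrable_atLeastAtMost[of x y k] that by (simp add: mult.commute)
  have "(\<integral>s. indicator {x..y} s * (w' s * (\<integral>t. indicator {x..s} t * u2 t \<partial>lborel)) \<partial>lborel)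
      = (\<integral>s. indicator {x..y} s * (w' s * v s) - v x * (indicator {x..y} s * w' s) \<partial>lborel)"
  proof (intro Bochner_Integration.integral_cong refl)
    fix s
    show "indicator {x..y} s * (w' s * (\<integral>t. indicator {x..s} t * u2 t \<partial>lborel))
        = indicator {x..y} s * (w' s * v s) - v x * (indicator {x..y} s * w' s)"
    proof (cases "s \<in> {x..y}")
      case True
      then have "(\<integral>t. indicator {x..s} t * u2 t \<partial>lborel) = v s - v x"
        using second_derivs_integral(2)[OF sd, of x s] by simp
      then show ?thesis using True by (simp add: right_diff_distrib)
    qed simp
  qed
  also have "\<dots> = (\<integral>s. indicator {x..y} s * (w' s * v s) \<partial>lborel) - v x * (\<integral>s. indicator {x..y} s * w' s \<partial>lborel)"
    using int[of "\<lambda>s. w' s * v s"] int[of w'] w'c vc by simp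
  also have "(\<integral>s. indicator {x..y} s * w' s \<partial>lborel) = w y - w x"
    using integral_FTC_Icc_real[OF xy w w'c] by (simp add: mult.commute)
  finally have A: "(\<integral>s. indicator {x..y} s * (w' s * (\<integral>t. indicator {x..s} t * u2 t \<partial>lborel)) \<partial>lborel)
      = (\<integral>s. indicator {x..y} s * (w' s * v s) \<partial>lborel) - v x * (w y - w x)" .
  have I: "(\<integral>t. indicator {x..y} t * u2 t \<partial>lborel) = v y - v x"
    using second_derivs_integral(2)[OF sd xy] by simp
  show ?thesis
    unfolding integral_by_parts_indicator[OF xy second_derivs_integral(1)[OF sd xy] w w'c w'b] A I
    by (simp add: algebra_simps)
qed

section \<open>The integrating factor\<close>

text \<open>Since \<open>(cosh t powr (-2b))' = -2 b tanh t cosh t powr (-2b)\<close>, multiplying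
  \<open>u'' - 2 b tanh u' = f\<close> by this factor turns it into \<open>(cosh powr (-2b) u')' = cosh powr (-2b) f\<close>.\<close>
definition integrating_factor :: "real \<Rightarrow> real \<Rightarrow> real" where
  "integrating_factor b t = cosh t powr (-2*b)"

lemma integrating_factor_pos: "0 < integrating_factor b t"
  by (simp add: integrating_factor_def)

lemma integrating_factor_at_0[simp]: "integrating_factor b 0 = 1"
  by (simp add: integrating_factor_def)

lemma integrating_factor_antimono:
  assumes "0 \<le> b" "0 \<le> x" "x \<le> t"
  shows "integrating_factor b t \<le> integrating_factor b x"
  using assms unfolding integrating_factor_def by (intro powr_mono2') (auto simp: cosh_real_nonneg_le_iff)

lemma integrating_factor_le_1: "0 \<le> b \<Longrightarrow> integrating_factor b t \<le> 1"
  using integrating_factor_antimono[of b 0 "\<bar>t\<bar>"] by (simp add: integrating_factor_def)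

lemma integrating_factor_has_derivative:
  "(integrating_factor b has_real_derivative - 2 * b * tanh t * integrating_factor b t) (at t)"
proof -
  have "((\<lambda>t. cosh t powr (-2*b)) has_real_derivative (-2*b) * cosh t powr (-2*b - 1) * sinh t) (at t)"
    by (auto intro!: derivative_eq_intros)
  moreover have "cosh t powr (-2*b - 1) = cosh t powr (-2*b) / cosh t"
    by (simp add: powr_diff)
  ultimately show ?thesis
    unfolding integrating_factor_def[abs_def] by (simp add: tanh_def mult_ac)
qed

lemma isCont_integrating_factor: "isCont (integrating_factor b) t"
  using DERIV_isCont[OF integrating_factor_has_derivative] .

lemma borel_measurable_integrating_factor[measurable]: "integrating_factor b \<in> borel_measurable borel"
  by (intro borel_measurable_continuous_onI continuous_at_imp_continuous_on ballI isCont_integrating_factor)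

lemma borel_measurable_tanh[measurable]: "(tanh :: real \<Rightarrow> real) \<in> borel_measurable borel"
  by (intro borel_measurable_continuous_onI continuous_on_tanh continuous_on_id) auto

lemma abs_mult_integrating_factor_le: "0 \<le> b \<Longrightarrow> \<bar>integrating_factor b t * z\<bar> \<le> \<bar>z\<bar>"
  using integrating_factor_le_1[of b t] integrating_factor_pos[of b t]
  by (simp add: abs_mult mult_left_le_one_le)

text \<open>The row and column integrals of the kernel \<open>2 b tanh x \<cdot> integrating_factor b t / integrating_factor b x\<close>
  (for \<open>0 \<le> x \<le> t\<close>) are exact derivatives; this makes Schur's test uniform in \<open>b\<close>.\<close>
lemma nn_integral_tanh_integrating_factor_tail:
  assumes b: "0 \<le> b" and x: "0 \<le> x"
  shows "(\<integral>\<^sup>+t. ennreal (2*b*tanh t * integrating_factor b t) * indicator {x..} t \<partial>lborel)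
    \<le> ennreal (integrating_factor b x)"
proof (cases "b = 0")
  case False
  then have "0 < b" using b by simp
  then have lim: "((\<lambda>t. - integrating_factor b t) \<longlongrightarrow> -0) at_top"
    unfolding integrating_factor_def by (intro tendsto_minus tendsto_neg_powr cosh_real_at_top) auto
  have "(\<integral>\<^sup>+t. ennreal (2*b*tanh t * integrating_factor b t) * indicator {x..} t \<partial>lborel)
      = ennreal (-0 - (- integrating_factor b x))"
  proof (rule nn_integral_FTC_atLeast[OF _ _ _ lim])
    fix t assume "x \<le> t"
    show "((\<lambda>t. - integrating_factor b t) has_real_derivative 2*b*tanh t * integrating_factor b t) (at t)"
      using DERIV_minus[OF integrating_factor_has_derivative[of b t]] by simp
    show "0 \<le> 2*b*tanh t * integrating_factor b t"
      using b \<open>x \<le> t\<close> x integrating_factor_pos[of b t] by simp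
  qed measurable
  then show ?thesis by simp
qed simp

lemma nn_integral_tanh_integrating_factor_head:
  assumes b: "0 \<le> b" and t: "0 \<le> t"
  shows "(\<integral>\<^sup>+x. ennreal (2*b*tanh x / integrating_factor b x) * indicator {0..t} x \<partial>lborel)
    \<le> ennreal (1 / integrating_factor b t)"
proof -
  have "(\<integral>\<^sup>+x. ennreal (2*b*tanh x / integrating_factor b x) * indicator {0..t} x \<partial>lborel)
      = ennreal (1 / integrating_factor b t - 1 / integrating_factor b 0)"
  proof (rule nn_integral_FTC_Icc)
    fix x :: real assume x: "x \<in> {0..t}"
    have "((\<lambda>x. 1 / integrating_factor b x) has_real_derivative
        - (- 2 * b * tanh x * integrating_factor b x) / (integrating_factor b x * integrating_factor b x)) (at x)"
      using DERIV_inverse_fun[OF integrating_factor_has_derivative[of b x]] integrating_factor_pos[of b x]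
      by (simp add: divide_inverse)
    moreover have "- (- 2 * b * tanh x * integrating_factor b x) / (integrating_factor b x * integrating_factor b x)
        = 2*b*tanh x / integrating_factor b x"
      using integrating_factor_pos[of b x] by (simp add: field_simps)
    ultimately show "((\<lambda>x. 1 / integrating_factor b x) has_real_derivative 2*b*tanh x / integrating_factor b x) (at x)"
      by simp
    show "0 \<le> 2*b*tanh x / integrating_factor b x"
      using b x integrating_factor_pos[of b x] by simp
  qed (use t in auto)
  then show ?thesis by (simp add: ennreal_leI)
qed

section \<open>Solutions of \<open>u'' - 2 b tanh x u' = f\<close>\<close>

text \<open>\<open>v\<close> and \<open>u2\<close> stand for \<open>u'\<close> and \<open>u''\<close>.\<close>
definition Lb_solution :: "real \<Rightarrow> real \<Rightarrow> real \<Rightarrow> (real \<Rightarrow> real) \<Rightarrow> (real \<Rightarrow> real) \<Rightarrow>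
    (real \<Rightarrow> real) \<Rightarrow> (real \<Rightarrow> real) \<Rightarrow> bool" where
  "Lb_solution p \<gamma> b u v u2 f \<longleftrightarrow> 0 \<le> b \<and> second_derivs u v u2 \<and>
     in_wLp p (\<gamma>-2) u \<and> in_wLp p (\<gamma>-1) v \<and> in_wLp p \<gamma> f \<and> u2 \<in> borel_measurable borel \<and>
     (AE x in lborel. u2 x - 2 * b * tanh x * v x = f x)"

lemma Lb_solution_reflect:
  assumes "Lb_solution p \<gamma> b u v u2 f"
  shows "Lb_solution p \<gamma> b (\<lambda>x. u (-x)) (\<lambda>x. - v (-x)) (\<lambda>x. u2 (-x)) (\<lambda>x. f (-x))"
proof -
  have eq: "AE x in lborel. u2 x - 2 * b * tanh x * v x = f x"
    and [measurable]: "u2 \<in> borel_measurable borel" "v \<in> borel_measurable borel" "f \<in> borel_measurable borel"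
    using assms second_derivs_borel_measurable by (auto simp: Lb_solution_def in_wLp_def)
  have "AE x in distr lborel borel uminus. u2 x - 2 * b * tanh x * v x = f x"
    by (subst lborel_distr_uminus) (rule eq)
  then have "AE x in lborel. u2 (-x) - 2 * b * tanh x * (- v (-x)) = f (-x)"
    by (subst (asm) AE_distr_iff) auto
  then show ?thesis
    using assms in_wLp_reflect[of p _ _ 1] in_wLp_reflect[of p _ _ "-1"] second_derivs_reflect
    unfolding Lb_solution_def by fastforce
qed

lemma second_derivs_eq_neg_tail:
  assumes p: "1 < p" and e: "-1/p < e"
    and sd: "second_derivs u v u2" and uL: "in_wLp p e u" and vL: "in_wLp p (e+1) v"
  shows "u x = - (\<integral>t. indicator {x..} t * v t \<partial>lborel)"
proof (rule eq_neg_integral_tail[OF _ _ uL])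
  show "integrable lborel v"
    using in_wLp_integrable[OF p _ vL] e by simp
  fix y assume "x \<le> y"
  have "(\<integral>t. v t * indicator {x..y} t \<partial>lborel) = u y - u x"
    using \<open>x \<le> y\<close> sd second_derivs_isCont[OF sd] unfolding second_derivs_def
    by (intro integral_FTC_Icc_real) auto
  then show "u y - u x = (\<integral>t. indicator {x..y} t * v t \<partial>lborel)"
    by (simp add: mult.commute)
qed (use p e in \<open>auto simp: field_simps\<close>)

lemma Lb_solution_derivative_eq:
  assumes p: "1 < p" and \<gamma>: "1 - 1/p < \<gamma>" and H: "Lb_solution p \<gamma> b u v u2 f"
  shows "integrating_factor b x * v x = - (\<integral>t. indicator {x..} t * (integrating_factor b t * f t) \<partial>lborel)"
proof -
  have b: "0 \<le> b" and sd: "second_derivs u v u2" and vL: "in_wLp p (\<gamma>-1) v" and fL: "in_wLp p \<gamma> f"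
    and [measurable]: "u2 \<in> borel_measurable borel"
    and eq: "AE x in lborel. u2 x - 2 * b * tanh x * v x = f x"
    using H by (auto simp: Lb_solution_def)
  have fint: "integrable lborel f" using in_wLp_integrable[OF p \<gamma> fL] .
  have [measurable]: "f \<in> borel_measurable borel" "v \<in> borel_measurable borel"
    using fL second_derivs_borel_measurable[OF sd] by (auto simp: in_wLp_def)
  define w' where "w' = (\<lambda>s. - 2 * b * tanh s * integrating_factor b s)"
  have w': "(integrating_factor b has_real_derivative w' s) (at s)" "isCont w' s" for s
    unfolding w'_def by (rule integrating_factor_has_derivative) (auto intro!: continuous_intros isCont_integrating_factor)
  have w'b: "\<bar>w' s\<bar> \<le> 2 * b" for s
  proof -
    have "\<bar>integrating_factor b s * tanh s\<bar> \<le> 1"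
      using abs_mult_integrating_factor_le[OF b, of s "tanh s"] tanh_real_bounds[of s] by auto
    then show ?thesis using b by (simp add: w'_def abs_mult mult_left_le mult_ac)
  qed
  have int: "integrable lborel (\<lambda>t. indicator A t * (integrating_factor b t * f t))"
    if [measurable]: "A \<in> sets borel" for A :: "real set"
    by (rule Bochner_Integration.integrable_bound[OF fint])
      (use abs_mult_integrating_factor_le[OF b] in \<open>auto simp: indicator_def\<close>)
  show ?thesis
  proof (rule eq_neg_integral_tail[OF _ _ vL])
    show "integrable lborel (\<lambda>t. integrating_factor b t * f t)"
      using int[of UNIV] by simp
    fix y assume xy: "x \<le> y"
    have "(\<integral>t. indicator {x..y} t * (integrating_factor b t * u2 t) \<partial>lborel)
        = (\<integral>t. indicator {x..y} t * (integrating_factor b t * f t) - indicator {x..y} t * (w' t * v t) \<partial>lborel)"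
      using eq by (intro integral_cong_AE) (auto simp: w'_def algebra_simps elim!: eventually_mono)
    also have "\<dots> = (\<integral>t. indicator {x..y} t * (integrating_factor b t * f t) \<partial>lborel)
        - (\<integral>t. indicator {x..y} t * (w' t * v t) \<partial>lborel)"
      using int borel_integrable_atLeastAtMost[of x y "\<lambda>s. w' s * v s"] w'(2) second_derivs_isCont[OF sd]
      by (simp add: mult.commute)
    finally show "integrating_factor b y * v y - integrating_factor b x * v x
        = (\<integral>t. indicator {x..y} t * (integrating_factor b t * f t) \<partial>lborel)"
      using second_derivs_product_rule[OF sd xy w' w'b] by simp
  next
    show "\<bar>integrating_factor b y * v y\<bar> \<le> \<bar>v y\<bar>" for y
      by (rule abs_mult_integrating_factor_le[OF b])
  qed (use p \<gamma> in \<open>auto simp: field_simps\<close>)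
qed

lemma Lb_solution_derivative_bound:
  assumes p: "1 < p" and \<gamma>: "1 - 1/p < \<gamma>" and H: "Lb_solution p \<gamma> b u v u2 f"
  shows "ennreal \<bar>v x\<bar> \<le> (\<integral>\<^sup>+t. ennreal (indicator {x..} t * (\<bar>f t\<bar> * (integrating_factor b t / integrating_factor b x))) \<partial>lborel)"
proof -
  have b: "0 \<le> b" and fL: "in_wLp p \<gamma> f" using H by (auto simp: Lb_solution_def)
  have fint: "integrable lborel f" using in_wLp_integrable[OF p \<gamma> fL] .
  have [measurable]: "f \<in> borel_measurable borel" using fL by (simp add: in_wLp_def)
  have i1: "integrable lborel (\<lambda>t. indicator {x..} t * (integrating_factor b t * f t))"
    and i2: "integrable lborel (\<lambda>t. indicator {x..} t * (\<bar>f t\<bar> * integrating_factor b t))"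
    using abs_mult_integrating_factor_le[OF b]
    by (auto intro!: Bochner_Integration.integrable_bound[OF fint] simp: indicator_def abs_mult mult.commute)
  have "integrating_factor b x * \<bar>v x\<bar> = \<bar>\<integral>t. indicator {x..} t * (integrating_factor b t * f t) \<partial>lborel\<bar>"
    using Lb_solution_derivative_eq[OF p \<gamma> H, of x] integrating_factor_pos[of b x]
    by (metis abs_minus_cancel abs_mult abs_of_pos)
  also have "\<dots> \<le> (\<integral>t. indicator {x..} t * (\<bar>f t\<bar> * integrating_factor b t) \<partial>lborel)"
    by (rule integral_abs_bound_integral[OF i1 i2])
      (auto simp: indicator_def abs_mult integrating_factor_pos less_imp_le)
  finally have "\<bar>v x\<bar> \<le> (\<integral>t. indicator {x..} t * (\<bar>f t\<bar> * (integrating_factor b t / integrating_factor b x)) \<partial>lborel)"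
    using integrating_factor_pos[of b x] by (simp add: field_simps)
  moreover have "(\<integral>\<^sup>+t. ennreal (indicator {x..} t * (\<bar>f t\<bar> * (integrating_factor b t / integrating_factor b x))) \<partial>lborel)
      = ennreal (\<integral>t. indicator {x..} t * (\<bar>f t\<bar> * (integrating_factor b t / integrating_factor b x)) \<partial>lborel)"
    using i2 by (intro nn_integral_eq_integral) (auto simp: integrating_factor_pos less_imp_le mult.assoc)
  ultimately show ?thesis by (simp add: ennreal_leI)
qed

text \<open>On \<open>[0,\<infinity>)\<close> the integrating factor is decreasing, so it can be dropped from the previous bound.\<close>
lemma Lb_solution_derivative_le_tail:
  assumes p: "1 < p" and \<gamma>: "1 - 1/p < \<gamma>" and H: "Lb_solution p \<gamma> b u v u2 f" and x: "0 \<le> x"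
  shows "ennreal \<bar>v x\<bar> \<le> (\<integral>\<^sup>+t. ennreal (indicator {x..} t * \<bar>f t\<bar>) \<partial>lborel)"
proof -
  have b: "0 \<le> b" using H by (simp add: Lb_solution_def)
  have "indicator {x..} t * (\<bar>f t\<bar> * (integrating_factor b t / integrating_factor b x)) \<le> indicator {x..} t * \<bar>f t\<bar>" for t
  proof (cases "x \<le> t")
    case True
    then have "integrating_factor b t / integrating_factor b x \<le> 1"
      using integrating_factor_antimono[OF b x True] integrating_factor_pos[of b x] by simp
    then have "\<bar>f t\<bar> * (integrating_factor b t / integrating_factor b x) \<le> \<bar>f t\<bar>"
      by (rule mult_left_le) simp
    then show ?thesis using True by simp
  qed simp
  then have "(\<integral>\<^sup>+t. ennreal (indicator {x..} t * (\<bar>f t\<bar> * (integrating_factor b t / integrating_factor b x))) \<partial>lborel)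
      \<le> (\<integral>\<^sup>+t. ennreal (indicator {x..} t * \<bar>f t\<bar>) \<partial>lborel)"
    by (intro nn_integral_mono ennreal_leI)
  with Lb_solution_derivative_bound[OF p \<gamma> H, of x] show ?thesis
    by (rule order_trans)
qed

lemma Lb_solution_derivative_estimate_pos:
  assumes p: "1 < p" and \<gamma>: "1 - 1/p < \<gamma>" and H: "Lb_solution p \<gamma> b u v u2 f"
  shows "wLp_pow_pos p (\<gamma>-1) v \<le> ennreal (hardy_jb_const p (\<gamma>-1)) * wLp_pow p \<gamma> f"
proof -
  have sd: "second_derivs u v u2" and fL: "in_wLp p \<gamma> f" using H by (auto simp: Lb_solution_def)
  have "wLp_pow_pos p (\<gamma>-1) v \<le> ennreal (hardy_jb_const p (\<gamma>-1)) * wLp_pow_pos p (\<gamma>-1+1) f"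
    using p \<gamma> second_derivs_borel_measurable[OF sd] fL Lb_solution_derivative_le_tail[OF p \<gamma> H]
    by (intro hardy_inequality_jb) (auto simp: in_wLp_def)
  also have "\<dots> \<le> ennreal (hardy_jb_const p (\<gamma>-1)) * wLp_pow p \<gamma> f"
    by (simp add: mult_left_mono wLp_pow_pos_le)
  finally show ?thesis .
qed

lemma second_derivs_estimate_pos:
  assumes p: "1 < p" and e: "-1/p < e"
    and sd: "second_derivs u v u2" and uL: "in_wLp p e u" and vL: "in_wLp p (e+1) v"
  shows "wLp_pow_pos p e u \<le> ennreal (hardy_jb_const p e) * wLp_pow_pos p (e+1) v"
proof (rule hardy_inequality_jb[OF p e])
  show "u \<in> borel_measurable borel" "v \<in> borel_measurable borel"
    using uL second_derivs_borel_measurable[OF sd] by (auto simp: in_wLp_def)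
  have vint: "integrable lborel v" using in_wLp_integrable[OF p _ vL] e by simp
  fix x :: real
  have iv: "integrable lborel (\<lambda>t. indicator {x..} t * v t)"
    and iv': "integrable lborel (\<lambda>t. indicator {x..} t * \<bar>v t\<bar>)"
    using vint by (auto intro: Bochner_Integration.integrable_bound simp: indicator_def)
  have "\<bar>u x\<bar> = \<bar>\<integral>t. indicator {x..} t * v t \<partial>lborel\<bar>"
    using second_derivs_eq_neg_tail[OF p e sd uL vL, of x] by simp
  also have "\<dots> \<le> (\<integral>t. indicator {x..} t * \<bar>v t\<bar> \<partial>lborel)"
    by (rule integral_abs_bound_integral[OF iv iv']) (auto simp: indicator_def)
  finally have "\<bar>u x\<bar> \<le> (\<integral>t. indicator {x..} t * \<bar>v t\<bar> \<partial>lborel)" .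
  moreover have "(\<integral>\<^sup>+t. ennreal (indicator {x..} t * \<bar>v t\<bar>) \<partial>lborel) = ennreal (\<integral>t. indicator {x..} t * \<bar>v t\<bar> \<partial>lborel)"
    using iv' by (intro nn_integral_eq_integral) auto
  ultimately show "ennreal \<bar>u x\<bar> \<le> (\<integral>\<^sup>+t. ennreal (indicator {x..} t * \<bar>v t\<bar>) \<partial>lborel)"
    by (simp add: ennreal_leI)
qed

lemma jb_powr_ratio_le_1:
  assumes "0 \<le> x" "x \<le> t" "0 \<le> \<gamma>"
  shows "jb x powr \<gamma> / jb t powr \<gamma> \<le> 1"
  using assms jb_mono[of x t] jb_pos[of x] jb_pos[of t] by (simp add: powr_mono2)

text \<open>For \<open>x \<ge> 0\<close>, \<open>2 b tanh x u'(x) \<langle>x\<rangle>\<^sup>\<gamma>\<close> is bounded by the integral of this kernel against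
  \<open>|f| \<langle>\<cdot>\<rangle>\<^sup>\<gamma>\<close>.\<close>
definition drift_kernel :: "real \<Rightarrow> real \<Rightarrow> real \<Rightarrow> real \<Rightarrow> real" where
  "drift_kernel b \<gamma> x t = (if 0 \<le> x \<and> x \<le> t then
     2*b*tanh x * (integrating_factor b t / integrating_factor b x) * (jb x powr \<gamma> / jb t powr \<gamma>) else 0)"

lemma drift_kernel_nonneg: "0 \<le> b \<Longrightarrow> 0 \<le> drift_kernel b \<gamma> x t"
  by (simp add: drift_kernel_def integrating_factor_pos less_imp_le)

lemma borel_measurable_drift_kernel[measurable]:
  "(\<lambda>z. drift_kernel b \<gamma> (fst z) (snd z)) \<in> borel_measurable (borel \<Otimes>\<^sub>M borel)"
  unfolding drift_kernel_def by measurable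

lemma drift_kernel_row:
  assumes b: "0 \<le> b" and \<gamma>: "0 \<le> \<gamma>"
  shows "(\<integral>\<^sup>+t. ennreal (drift_kernel b \<gamma> x t) \<partial>lborel) \<le> 1"
proof (cases "0 \<le> x")
  case x: True
  have "(\<integral>\<^sup>+t. ennreal (drift_kernel b \<gamma> x t) \<partial>lborel)
      \<le> (\<integral>\<^sup>+t. ennreal (1 / integrating_factor b x) * (ennreal (2*b*tanh t * integrating_factor b t) * indicator {x..} t) \<partial>lborel)"
  proof (intro nn_integral_mono)
    fix t :: real
    show "ennreal (drift_kernel b \<gamma> x t)
        \<le> ennreal (1 / integrating_factor b x) * (ennreal (2*b*tanh t * integrating_factor b t) * indicator {x..} t)"
    proof (cases "x \<le> t")
      case xt: True
      have A: "2*b*tanh x * (integrating_factor b t / integrating_factor b x) \<le> 2*b*tanh t * (integrating_factor b t / integrating_factor b x)"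
        using b xt by (intro mult_right_mono) (auto simp: integrating_factor_pos less_imp_le mult_left_mono)
      have A0: "0 \<le> 2*b*tanh t * (integrating_factor b t / integrating_factor b x)"
        using b xt x by (simp add: integrating_factor_pos less_imp_le)
      have "2*b*tanh x * (integrating_factor b t / integrating_factor b x) * (jb x powr \<gamma> / jb t powr \<gamma>)
          \<le> 2*b*tanh t * (integrating_factor b t / integrating_factor b x) * 1"
        by (rule mult_mono[OF A jb_powr_ratio_le_1[OF x xt \<gamma>] A0]) simp
      then have "drift_kernel b \<gamma> x t \<le> 2*b*tanh t * (integrating_factor b t / integrating_factor b x)"
        using x xt by (simp add: drift_kernel_def)
      then show ?thesis
        using b xt x integrating_factor_pos[of b x] integrating_factor_pos[of b t]
        by (simp add: ennreal_mult[symmetric] ennreal_leI)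
    qed (simp add: drift_kernel_def)
  qed
  also have "\<dots> = ennreal (1 / integrating_factor b x) * (\<integral>\<^sup>+t. ennreal (2*b*tanh t * integrating_factor b t) * indicator {x..} t \<partial>lborel)"
    by (rule nn_integral_cmult) measurable
  also have "\<dots> \<le> ennreal (1 / integrating_factor b x) * ennreal (integrating_factor b x)"
    by (intro mult_left_mono nn_integral_tanh_integrating_factor_tail b x) auto
  also have "\<dots> = 1"
    using integrating_factor_pos[of b x] by (simp add: ennreal_mult[symmetric])
  finally show ?thesis .
qed (simp add: drift_kernel_def)

lemma drift_kernel_col:
  assumes b: "0 \<le> b" and \<gamma>: "0 \<le> \<gamma>"
  shows "(\<integral>\<^sup>+x. ennreal (drift_kernel b \<gamma> x t) \<partial>lborel) \<le> 1"
proof (cases "0 \<le> t")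
  case t: True
  have "(\<integral>\<^sup>+x. ennreal (drift_kernel b \<gamma> x t) \<partial>lborel)
      \<le> (\<integral>\<^sup>+x. ennreal (integrating_factor b t) * (ennreal (2*b*tanh x / integrating_factor b x) * indicator {0..t} x) \<partial>lborel)"
  proof (intro nn_integral_mono)
    fix x :: real
    show "ennreal (drift_kernel b \<gamma> x t)
        \<le> ennreal (integrating_factor b t) * (ennreal (2*b*tanh x / integrating_factor b x) * indicator {0..t} x)"
    proof (cases "0 \<le> x \<and> x \<le> t")
      case xt: True
      have "0 \<le> 2*b*tanh x * (integrating_factor b t / integrating_factor b x)"
        using b xt by (simp add: integrating_factor_pos less_imp_le)
      then have "2*b*tanh x * (integrating_factor b t / integrating_factor b x) * (jb x powr \<gamma> / jb t powr \<gamma>)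
          \<le> 2*b*tanh x * (integrating_factor b t / integrating_factor b x) * 1"
        using xt jb_powr_ratio_le_1[of x t \<gamma>] \<gamma> by (intro mult_left_mono) auto
      then have "drift_kernel b \<gamma> x t \<le> 2*b*tanh x * (integrating_factor b t / integrating_factor b x)"
        using xt by (simp add: drift_kernel_def)
      then show ?thesis
        using b xt integrating_factor_pos[of b x] integrating_factor_pos[of b t]
        by (simp add: ennreal_mult[symmetric] ennreal_leI mult_ac)
    qed (auto simp: drift_kernel_def)
  qed
  also have "\<dots> = ennreal (integrating_factor b t) * (\<integral>\<^sup>+x. ennreal (2*b*tanh x / integrating_factor b x) * indicator {0..t} x \<partial>lborel)"
    by (rule nn_integral_cmult) measurable
  also have "\<dots> \<le> ennreal (integrating_factor b t) * ennreal (1 / integrating_factor b t)"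
    by (intro mult_left_mono nn_integral_tanh_integrating_factor_head b t) auto
  also have "\<dots> = 1"
    using integrating_factor_pos[of b t] by (simp add: ennreal_mult[symmetric])
  finally show ?thesis .
next
  case False
  then have "(\<lambda>x. ennreal (drift_kernel b \<gamma> x t)) = (\<lambda>x. 0)"
    by (auto simp: drift_kernel_def fun_eq_iff)
  then show ?thesis by simp
qed

lemma Lb_solution_drift_estimate_pos:
  assumes p: "1 < p" and \<gamma>: "1 - 1/p < \<gamma>" "0 \<le> \<gamma>" and H: "Lb_solution p \<gamma> b u v u2 f"
  shows "wLp_pow_pos p \<gamma> (\<lambda>x. 2*b*tanh x * v x) \<le> wLp_pow p \<gamma> f"
proof -
  have b: "0 \<le> b" and fL: "in_wLp p \<gamma> f" using H by (auto simp: Lb_solution_def)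
  have [measurable]: "f \<in> borel_measurable borel" using fL by (simp add: in_wLp_def)
  define g where "g = (\<lambda>t. \<bar>f t\<bar> * jb t powr \<gamma>)"
  define h where "h = (\<lambda>x. indicator {0..} x * \<bar>2*b*tanh x * v x * jb x powr \<gamma>\<bar>)"
  have "(\<integral>\<^sup>+x. ennreal (h x powr p) \<partial>lborel) \<le> ennreal 1 * (\<integral>\<^sup>+t. ennreal (g t powr p) \<partial>lborel)"
  proof (rule Schur_test[OF p, where K="drift_kernel b \<gamma>" and \<phi>="\<lambda>_. 1" and a="\<lambda>_. 1"])
    show "g \<in> borel_measurable borel" unfolding g_def by measurable
    show "\<And>x t. 0 \<le> drift_kernel b \<gamma> x t" using drift_kernel_nonneg[OF b] .
    show "\<And>x. (\<integral>\<^sup>+t. ennreal (drift_kernel b \<gamma> x t * 1) \<partial>lborel) \<le> ennreal 1"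
      using drift_kernel_row[OF b \<gamma>(2)] by simp
    show "\<And>t. (\<integral>\<^sup>+x. ennreal (1 powr (p-1) * drift_kernel b \<gamma> x t) \<partial>lborel) \<le> ennreal (1 * 1 powr (p-1))"
      using drift_kernel_col[OF b \<gamma>(2)] by simp
    fix x :: real
    show "ennreal (h x) \<le> (\<integral>\<^sup>+t. ennreal (drift_kernel b \<gamma> x t * g t) \<partial>lborel)"
    proof (cases "0 \<le> x")
      case x: True
      define c where "c = 2*b*tanh x * jb x powr \<gamma>"
      have c: "0 \<le> c" using b x by (simp add: c_def)
      have "ennreal (h x) = ennreal c * ennreal \<bar>v x\<bar>"
        using x b by (simp add: h_def c_def ennreal_mult[symmetric] abs_mult mult_ac)
      also have "\<dots> \<le> ennreal c * (\<integral>\<^sup>+t. ennreal (indicator {x..} t * (\<bar>f t\<bar> * (integrating_factor b t / integrating_factor b x))) \<partial>lborel)"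
        by (intro mult_left_mono Lb_solution_derivative_bound[OF p \<gamma>(1) H]) auto
      also have "\<dots> = (\<integral>\<^sup>+t. ennreal c * ennreal (indicator {x..} t * (\<bar>f t\<bar> * (integrating_factor b t / integrating_factor b x))) \<partial>lborel)"
        by (rule nn_integral_cmult[symmetric]) measurable
      also have "\<dots> = (\<integral>\<^sup>+t. ennreal (drift_kernel b \<gamma> x t * g t) \<partial>lborel)"
      proof (intro nn_integral_cong)
        fix t :: real
        have "0 \<le> \<bar>f t\<bar> * (integrating_factor b t / integrating_factor b x)"
          by (simp add: integrating_factor_pos less_imp_le)
        moreover have "x \<le> t \<Longrightarrow> drift_kernel b \<gamma> x t * g t = c * (\<bar>f t\<bar> * (integrating_factor b t / integrating_factor b x))"
          using x jb_pos[of t] by (simp add: drift_kernel_def g_def c_def field_simps)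
        ultimately show "ennreal c * ennreal (indicator {x..} t * (\<bar>f t\<bar> * (integrating_factor b t / integrating_factor b x)))
            = ennreal (drift_kernel b \<gamma> x t * g t)"
          using c by (cases "x \<le> t") (simp_all add: ennreal_mult[symmetric] drift_kernel_def)
      qed
      finally show ?thesis .
    qed (simp add: h_def)
  qed (auto simp: g_def h_def)
  moreover have "h x powr p = indicator {0..} x * \<bar>2*b*tanh x * v x * jb x powr \<gamma>\<bar> powr p" for x
    using p by (simp add: h_def indicator_def)
  moreover have "g t powr p = \<bar>f t * jb t powr \<gamma>\<bar> powr p" for t
    using jb_pos[of t] by (simp add: g_def abs_mult)
  ultimately show ?thesis unfolding wLp_pow_pos_def wLp_pow_def by simp
qed

lemma powr_add_le_two_powr:
  fixes a c p :: real
  assumes "0 \<le> a" "0 \<le> c" "0 < p"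
  shows "(a + c) powr p \<le> 2 powr p * (a powr p + c powr p)"
proof -
  have "(a + c) powr p \<le> (2 * max a c) powr p" using assms by (intro powr_mono2) auto
  also have "\<dots> = 2 powr p * max a c powr p" using assms by (simp add: powr_mult)
  also have "max a c powr p \<le> a powr p + c powr p" using assms by (auto simp: max_def)
  finally show ?thesis by simp
qed

lemma wLp_pow_le_of_AE_abs_le_add:
  assumes p: "0 < p" and le: "AE x in lborel. \<bar>g x\<bar> \<le> \<bar>g1 x\<bar> + \<bar>g2 x\<bar>"
    and [measurable]: "g1 \<in> borel_measurable borel" "g2 \<in> borel_measurable borel"
  shows "wLp_pow p e g \<le> ennreal (2 powr p) * (wLp_pow p e g1 + wLp_pow p e g2)"
proof -
  have "wLp_pow p e g \<le> (\<integral>\<^sup>+x. ennreal (2 powr p) *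
      (ennreal (\<bar>g1 x * jb x powr e\<bar> powr p) + ennreal (\<bar>g2 x * jb x powr e\<bar> powr p)) \<partial>lborel)"
    unfolding wLp_pow_def
  proof (rule nn_integral_mono_AE)
    show "AE x in lborel. ennreal (\<bar>g x * jb x powr e\<bar> powr p)
        \<le> ennreal (2 powr p) * (ennreal (\<bar>g1 x * jb x powr e\<bar> powr p) + ennreal (\<bar>g2 x * jb x powr e\<bar> powr p))"
      using le
    proof eventually_elim
      case (elim x)
      have "\<bar>g x * jb x powr e\<bar> \<le> \<bar>g1 x * jb x powr e\<bar> + \<bar>g2 x * jb x powr e\<bar>"
        using mult_right_mono[OF elim, of "jb x powr e"] by (simp add: abs_mult distrib_right)
      then have "\<bar>g x * jb x powr e\<bar> powr p \<le> (\<bar>g1 x * jb x powr e\<bar> + \<bar>g2 x * jb x powr e\<bar>) powr p"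
        using p by (intro powr_mono2) auto
      also have "\<dots> \<le> 2 powr p * (\<bar>g1 x * jb x powr e\<bar> powr p + \<bar>g2 x * jb x powr e\<bar> powr p)"
        using p by (intro powr_add_le_two_powr) auto
      finally have R: "\<bar>g x * jb x powr e\<bar> powr p
          \<le> 2 powr p * (\<bar>g1 x * jb x powr e\<bar> powr p + \<bar>g2 x * jb x powr e\<bar> powr p)" .
      have E: "ennreal (2 powr p) * (ennreal (\<bar>g1 x * jb x powr e\<bar> powr p) + ennreal (\<bar>g2 x * jb x powr e\<bar> powr p))
          = ennreal (2 powr p * (\<bar>g1 x * jb x powr e\<bar> powr p + \<bar>g2 x * jb x powr e\<bar> powr p))"
        by (simp add: ennreal_mult ennreal_plus)
      show ?case unfolding E by (rule ennreal_leI[OF R])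
    qed
  qed
  also have "\<dots> = ennreal (2 powr p) * (wLp_pow p e g1 + wLp_pow p e g2)"
    unfolding wLp_pow_def by (subst nn_integral_cmult) (auto simp: nn_integral_add)
  finally show ?thesis .
qed

lemma second_derivs_estimate:
  assumes p: "1 < p" and e: "-1/p < e"
    and sd: "second_derivs u v u2" and uL: "in_wLp p e u" and vL: "in_wLp p (e+1) v"
  shows "wLp_pow p e u \<le> ennreal (2 * hardy_jb_const p e) * wLp_pow p (e+1) v"
proof (rule wLp_pow_le_halves)
  have [measurable]: "v \<in> borel_measurable borel" using second_derivs_borel_measurable[OF sd] .
  show "u \<in> borel_measurable borel" using uL by (simp add: in_wLp_def)
  show "0 \<le> hardy_jb_const p e" using hardy_jb_const_nonneg[OF p e] .
  show "wLp_pow_pos p e u \<le> ennreal (hardy_jb_const p e) * wLp_pow p (e+1) v"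
    using second_derivs_estimate_pos[OF p e sd uL vL] wLp_pow_pos_le[of p "e+1" v]
    by (meson mult_left_mono order_trans zero_le)
  have "wLp_pow_pos p e (\<lambda>x. u (-x)) \<le> ennreal (hardy_jb_const p e) * wLp_pow_pos p (e+1) (\<lambda>x. - v (-x))"
    using second_derivs_estimate_pos[OF p e second_derivs_reflect[OF sd]] in_wLp_reflect[OF uL, of 1]
      in_wLp_reflect[OF vL, of "-1"]
    by simp
  also have "\<dots> \<le> ennreal (hardy_jb_const p e) * wLp_pow p (e+1) (\<lambda>x. v (-x))"
    using wLp_pow_pos_le[of p "e+1" "\<lambda>x. v (-x)"] by (intro mult_left_mono) (simp_all add: wLp_pow_pos_def)
  finally show "wLp_pow_pos p e (\<lambda>x. u (-x)) \<le> ennreal (hardy_jb_const p e) * wLp_pow p (e+1) v"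
    by (simp add: wLp_pow_reflect)
qed

lemma Lb_solution_derivative_estimate:
  assumes p: "1 < p" and \<gamma>: "1 - 1/p < \<gamma>" and H: "Lb_solution p \<gamma> b u v u2 f"
  shows "wLp_pow p (\<gamma>-1) v \<le> ennreal (2 * hardy_jb_const p (\<gamma>-1)) * wLp_pow p \<gamma> f"
proof (rule wLp_pow_le_halves)
  have sd: "second_derivs u v u2" and fL: "in_wLp p \<gamma> f" using H by (auto simp: Lb_solution_def)
  show "v \<in> borel_measurable borel" using second_derivs_borel_measurable[OF sd] .
  show "0 \<le> hardy_jb_const p (\<gamma>-1)" using p \<gamma> by (intro hardy_jb_const_nonneg) auto
  show "wLp_pow_pos p (\<gamma>-1) v \<le> ennreal (hardy_jb_const p (\<gamma>-1)) * wLp_pow p \<gamma> f"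
    using Lb_solution_derivative_estimate_pos[OF p \<gamma> H] .
  have "wLp_pow p \<gamma> (\<lambda>x. f (-x)) = wLp_pow p \<gamma> f"
    using fL by (intro wLp_pow_reflect) (simp add: in_wLp_def)
  then show "wLp_pow_pos p (\<gamma>-1) (\<lambda>x. v (-x)) \<le> ennreal (hardy_jb_const p (\<gamma>-1)) * wLp_pow p \<gamma> f"
    using Lb_solution_derivative_estimate_pos[OF p \<gamma> Lb_solution_reflect[OF H]] by (simp add: wLp_pow_pos_def)
qed

lemma Lb_solution_drift_estimate:
  assumes p: "1 < p" and \<gamma>: "1 - 1/p < \<gamma>" "0 \<le> \<gamma>" and H: "Lb_solution p \<gamma> b u v u2 f"
  shows "wLp_pow p \<gamma> (\<lambda>x. 2*b*tanh x * v x) \<le> ennreal 2 * wLp_pow p \<gamma> f"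
proof -
  have sd: "second_derivs u v u2" and fL: "in_wLp p \<gamma> f" using H by (auto simp: Lb_solution_def)
  have [measurable]: "v \<in> borel_measurable borel" using second_derivs_borel_measurable[OF sd] .
  have "wLp_pow p \<gamma> (\<lambda>x. f (-x)) = wLp_pow p \<gamma> f"
    using fL by (intro wLp_pow_reflect) (simp add: in_wLp_def)
  then have "wLp_pow p \<gamma> (\<lambda>x. 2*b*tanh x * v x) \<le> ennreal (2 * 1) * wLp_pow p \<gamma> f"
    using Lb_solution_drift_estimate_pos[OF p \<gamma> H] Lb_solution_drift_estimate_pos[OF p \<gamma> Lb_solution_reflect[OF H]]
    by (intro wLp_pow_le_halves) (simp_all add: wLp_pow_pos_def)
  then show ?thesis by simp
qed

lemma Lb_solution_second_derivative_estimate: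
  assumes p: "1 < p" and \<gamma>: "1 - 1/p < \<gamma>" "0 \<le> \<gamma>" and H: "Lb_solution p \<gamma> b u v u2 f"
  shows "wLp_pow p \<gamma> u2 \<le> ennreal (3 * 2 powr p) * wLp_pow p \<gamma> f"
proof -
  have sd: "second_derivs u v u2" and fL: "in_wLp p \<gamma> f"
    and eq: "AE x in lborel. u2 x - 2 * b * tanh x * v x = f x"
    using H by (auto simp: Lb_solution_def)
  have [measurable]: "v \<in> borel_measurable borel" "f \<in> borel_measurable borel"
    using fL second_derivs_borel_measurable[OF sd] by (auto simp: in_wLp_def)
  have "AE x in lborel. \<bar>u2 x\<bar> \<le> \<bar>f x\<bar> + \<bar>2*b*tanh x * v x\<bar>"
    using eq
  proof eventually_elim
    case (elim x)
    then have "u2 x = f x + 2*b*tanh x * v x" by simp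
    then show ?case by (simp only: abs_triangle_ineq)
  qed
  then have "wLp_pow p \<gamma> u2 \<le> ennreal (2 powr p) * (wLp_pow p \<gamma> f + wLp_pow p \<gamma> (\<lambda>x. 2*b*tanh x * v x))"
    using p by (intro wLp_pow_le_of_AE_abs_le_add) auto
  also have "\<dots> \<le> ennreal (2 powr p) * (ennreal 1 * wLp_pow p \<gamma> f + ennreal 2 * wLp_pow p \<gamma> f)"
    using Lb_solution_drift_estimate[OF p \<gamma> H] by (intro mult_left_mono add_left_mono) auto
  also have "\<dots> = ennreal (3 * 2 powr p) * wLp_pow p \<gamma> f"
    using ennreal_mult_add_mult[of 1 2 "wLp_pow p \<gamma> f"] by (simp add: ennreal_mult mult_ac)
  finally show ?thesis .
qed

definition Lb_const :: "real \<Rightarrow> real \<Rightarrow> real" where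
  "Lb_const p \<gamma> = 4 * hardy_jb_const p (\<gamma>-2) * hardy_jb_const p (\<gamma>-1) + 2 * hardy_jb_const p (\<gamma>-1) + 3 * 2 powr p"

lemma Lb_const_nonneg:
  assumes p: "1 < p" and \<gamma>: "2 - 1/p < \<gamma>"
  shows "0 \<le> Lb_const p \<gamma>"
proof -
  have "0 < 1/p" "1/p < 1" using p by auto
  then have "-1/p < \<gamma> - 1" "-1/p < \<gamma> - 2" using \<gamma> by linarith+
  then show ?thesis using p by (simp add: Lb_const_def hardy_jb_const_nonneg)
qed

lemma Lb_solution_estimate:
  assumes p: "1 < p" and \<gamma>: "2 - 1/p < \<gamma>" and H: "Lb_solution p \<gamma> b u v u2 f"
  shows "wLp_pow p (\<gamma>-2) u + wLp_pow p (\<gamma>-1) v + wLp_pow p \<gamma> u2 \<le> ennreal (Lb_const p \<gamma>) * wLp_pow p \<gamma> f"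
proof -
  have "0 < 1/p" "1/p < 1" using p by auto
  then have \<gamma>1: "1 - 1/p < \<gamma>" "0 \<le> \<gamma>" and \<gamma>2: "-1/p < \<gamma> - 2" using \<gamma> by linarith+
  define N C1 C2 where "N = wLp_pow p \<gamma> f" and "C1 = hardy_jb_const p (\<gamma>-1)" and "C2 = hardy_jb_const p (\<gamma>-2)"
  have C: "0 \<le> C1" "0 \<le> C2"
    unfolding C1_def C2_def using \<gamma>1 \<gamma>2 p by (auto intro!: hardy_jb_const_nonneg)
  have Ev: "wLp_pow p (\<gamma>-1) v \<le> ennreal (2 * C1) * N"
    unfolding N_def C1_def by (rule Lb_solution_derivative_estimate[OF p \<gamma>1(1) H])
  have sd: "second_derivs u v u2" and uL: "in_wLp p (\<gamma>-2) u" and vL: "in_wLp p (\<gamma>-1) v"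
    using H by (auto simp: Lb_solution_def)
  then have "wLp_pow p (\<gamma>-2) u \<le> ennreal (2 * C2) * wLp_pow p (\<gamma>-1) v"
    using second_derivs_estimate[OF p \<gamma>2 sd uL] unfolding C2_def by simp
  also have "\<dots> \<le> ennreal (2 * C2) * (ennreal (2 * C1) * N)"
    using Ev by (rule mult_left_mono) simp
  also have "\<dots> = ennreal (4 * C2 * C1) * N"
    using C by (simp add: ennreal_mult mult_ac)
  finally have Eu: "wLp_pow p (\<gamma>-2) u \<le> ennreal (4 * C2 * C1) * N" .
  have "wLp_pow p (\<gamma>-2) u + wLp_pow p (\<gamma>-1) v + wLp_pow p \<gamma> u2
      \<le> ennreal (4 * C2 * C1) * N + ennreal (2 * C1) * N + ennreal (3 * 2 powr p) * N"
    using Eu Ev Lb_solution_second_derivative_estimate[OF p \<gamma>1 H] unfolding N_def by (intro add_mono)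
  also have "\<dots> = ennreal (Lb_const p \<gamma>) * N"
    using ennreal_mult_add_mult[of "4 * C2 * C1" "2 * C1" N] ennreal_mult_add_mult[of "4 * C2 * C1 + 2 * C1" "3 * 2 powr p" N] C
    by (simp add: Lb_const_def C1_def C2_def)
  finally show ?thesis unfolding N_def .
qed

lemma M2_norm_le_of_wLp_pow:
  assumes p: "0 < p" and K: "0 \<le> K"
    and L: "in_wLp p e u" "in_wLp p (e+1) u1" "in_wLp p (e+2) u2" "in_wLp p (e+2) f"
    and le: "wLp_pow p e u + wLp_pow p (e+1) u1 + wLp_pow p (e+2) u2 \<le> ennreal K * wLp_pow p (e+2) f"
  shows "M2_norm p e u u1 u2 \<le> K powr (1/p) * wLp_norm p (e+2) f"
proof -
  define I0 I1 I2 If where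
    "I0 = (\<integral>x. \<bar>u x * jb x powr e\<bar> powr p \<partial>lborel)" and
    "I1 = (\<integral>x. \<bar>u1 x * jb x powr (e+1)\<bar> powr p \<partial>lborel)" and
    "I2 = (\<integral>x. \<bar>u2 x * jb x powr (e+2)\<bar> powr p \<partial>lborel)" and
    "If = (\<integral>x. \<bar>f x * jb x powr (e+2)\<bar> powr p \<partial>lborel)"
  have nn: "0 \<le> I0" "0 \<le> I1" "0 \<le> I2" "0 \<le> If"
    unfolding I0_def I1_def I2_def If_def by auto
  have "ennreal (I0 + I1 + I2) \<le> ennreal (K * If)"
    using le nn K unfolding wLp_pow_eq_integral[OF L(1)] wLp_pow_eq_integral[OF L(2)]
      wLp_pow_eq_integral[OF L(3)] wLp_pow_eq_integral[OF L(4)] I0_def[symmetric] I1_def[symmetric]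
      I2_def[symmetric] If_def[symmetric]
    by (simp add: ennreal_mult)
  then have "I0 + I1 + I2 \<le> K * If"
    using ennreal_le_iff[of "K * If" "I0 + I1 + I2"] K nn by (simp del: ennreal_plus)
  then have "(I0 + I1 + I2) powr (1/p) \<le> (K * If) powr (1/p)"
    using nn p by (intro powr_mono2) auto
  then show ?thesis
    unfolding M2_norm_def wLp_norm_def I0_def[symmetric] I1_def[symmetric] I2_def[symmetric] If_def[symmetric]
    using K nn by (simp add: powr_mult)
qed

theorem lemma3p5:
  fixes p \<gamma> :: real
  assumes "1 < p" and "\<gamma> > 2 - 1 / p"
  shows "\<exists>C::real. \<forall>b::real. \<forall>u u1 u2 f :: real \<Rightarrow> real.
           b \<ge> 0 \<longrightarrow> in_D p \<gamma> u u1 u2 \<longrightarrow> in_wLp p \<gamma> f \<longrightarrow>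
           (AE x in lborel. u2 x - 2 * b * tanh x * u1 x = f x) \<longrightarrow>
           M2_norm p (\<gamma> - 2) u u1 u2 \<le> C * wLp_norm p \<gamma> f"
proof (intro exI[of _ "Lb_const p \<gamma> powr (1/p)"] allI impI)
  fix b :: real and u u1 u2 f :: "real \<Rightarrow> real"
  assume b: "0 \<le> b" and D: "in_D p \<gamma> u u1 u2" and fL: "in_wLp p \<gamma> f"
    and eq: "AE x in lborel. u2 x - 2 * b * tanh x * u1 x = f x"
  have e: "\<gamma> - 2 + 1 = \<gamma> - 1" "\<gamma> - 2 + 2 = \<gamma>" by simp_all
  have L: "second_derivs u u1 u2" "in_wLp p (\<gamma>-2) u" "in_wLp p (\<gamma>-1) u1" "in_wLp p \<gamma> u2"
    using D unfolding in_D_def in_M2_def e by auto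
  then have "Lb_solution p \<gamma> b u u1 u2 f"
    using b fL eq by (simp add: Lb_solution_def in_wLp_def)
  then have "wLp_pow p (\<gamma>-2) u + wLp_pow p (\<gamma>-2+1) u1 + wLp_pow p (\<gamma>-2+2) u2
      \<le> ennreal (Lb_const p \<gamma>) * wLp_pow p (\<gamma>-2+2) f"
    unfolding e using Lb_solution_estimate assms by blast
  moreover have "0 \<le> Lb_const p \<gamma>"
    using Lb_const_nonneg assms by blast
  ultimately have "M2_norm p (\<gamma>-2) u u1 u2 \<le> Lb_const p \<gamma> powr (1/p) * wLp_norm p (\<gamma>-2+2) f"
    using L fL assms(1) by (intro M2_norm_le_of_wLp_pow) (simp_all add: e)
  then show "M2_norm p (\<gamma> - 2) u u1 u2 \<le> Lb_const p \<gamma> powr (1/p) * wLp_norm p \<gamma> f"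
    unfolding e .
qed

end
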